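(* Let $\mathcal{K}$ be a flat Kripke structure, $\Phi=\varphi\,\mathtt{U}^{\frac{x}{y}}\psi$ an $\mathtt{fLTL}$ formula (with $x\le y$, $y>0$), and $\mathcal{P}=(P_0,\dots,P_m)$ an augmented path schema in $\mathcal{K}$ that is consistent with respect to $\varphi$ and with respect to $\psi$. Let $P=P_k$ with $k<m$ be a loop of $\mathcal{P}$ (a non-terminal loop), let $v=\ell_0\ell_1\dots\ell_{|P|-1}$ be its sequence of locations, and let $\hat n=|P|\cdot y$. Then for every run $\sigma\in\mathtt{Runs}(\mathcal{P})$ of the form $\sigma=uv^nw$ (with $u$ a finite and $w$ an infinite sequence of locations) where $n\ge\hat n+2$, there are $n_1,n_2\in\mathbb{N}$ with $n=n_1+\hat n+n_2$ (so $\sigma=uv^{n_1}v^{\hat n}v^{n_2}w$) such that for all positions $i$ on $\sigma$ with $|u|\le i<|u|+(n_1-1)|P|$ or $|u|+(n_1+\hat n)|P|\le i<|u|+(n_1+\hat n+n_2-2)|P|$ we have $(\sigma,i)\models_\mathcal{P}\Phi$ if and only if $(\sigma,i+|P|)\models_\mathcal{P}\Phi$.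
   Context: Kripke structure: $\mathcal{K}=(S,s_I,E,\lambda)$ with finite $S$, $s_I\in S$, $E\subseteq S\times S$, $\lambda:S\to2^{AP}$ for a finite set $AP$. A simple loop is a finite path $s_0\dots s_k$ of pairwise distinct states with $(s_k,s_0)\in E$; $\mathcal{K}$ is flat if every state is the first state of at most one simple loop. $\mathtt{fLTL}$: $\varphi ::= p\mid\varphi\land\varphi\mid\neg\varphi\mid\mathtt{X}\varphi\mid\varphi\,\mathtt{U}^{\frac{x}{y}}\varphi$ with $p\in AP$, $x\le y$ naturals, $y>0$; $\mathtt{sub}(\Phi)$ denotes subformulae (assume $AP\subseteq\mathtt{sub}(\Phi)$). Over an infinite state sequence $\rho$ and position $i$: $(\rho,i)\models p$ iff $p\in\lambda(\rho(i))$; Booleans as usual; $(\rho,i)\models\mathtt{X}\varphi$ iff $(\rho,i+1)\models\varphi$; $(\rho,i)\models\varphi\,\mathtt{U}^{\frac{x}{y}}\psi$ iff $(\rho,i)\models\psi$ or there is $k\ge i$ with $(\rho,k+1)\models\psi$ and $y\cdot|\{j\in[i,k]\mid(\rho,j)\models\varphi\}|\ge x(k-i+1)$. Counter system: $(Q,q_I,C,\Delta)$, $C$ finite set of counters, $\Delta\subseteq Q\times\mathbb{Z}^C\times2^{\mathrm{G}(C)}\times Q$, $\mathrm{G}(C)=\{(c<0),(c\ge0)\mid c\in C\}$; a run is $q_0q_1\dots$ with $q_0=q_I$ such that there are valuations $\theta_0=\mathbf{0},\theta_1,\dots$ and transitions $(q_i,\mathbf{u}_i,G_i,q_{i+1})\in\Delta$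 with $\theta_{i+1}=\theta_i+\mathbf{u}_i$ satisfying all guards in $G_i$. Augmented state $a=(s,L,G,\mathbf{u},t)\in S\times2^{\mathtt{sub}(\Phi)}\times2^{\mathrm{G}(C)}\times\mathbb{Z}^C\times\{\mathtt{L},\mathtt{R}\}$ with projections $\mathtt{st},\mathtt{lab},\mathtt{g},\mathtt{u},\mathtt{t}$. Augmented path: $a_0\dots a_n$ with $(\mathtt{st}(a_i),\mathtt{st}(a_{i+1}))\in E$; row: all types $\mathtt{R}$; loop: non-empty, $(\mathtt{st}(a_n),\mathtt{st}(a_0))\in E$, states pairwise distinct, all types $\mathtt{L}$. APS in $\mathcal{K}$: $\mathcal{P}=(P_0,\dots,P_m)$ of rows and loops, $P_m$ a loop, $P_0\dots P_m$ an augmented path. Locations are indices $\ell\in[0,|\mathcal{P}|-1]$ into $P_0\dots P_m$; $\mathcal{P}[\ell]$ the augmented state there; $\mathtt{loc}_\mathcal{P}(k)$ the locations of $P_k$; $\mathtt{lab}_\mathcal{P}(\ell)=\mathtt{lab}(\mathcal{P}[\ell])$, etc. $\mathtt{CS}(\mathcal{P})=(\{0,\dots,|\mathcal{P}|-1\},0,C,\Delta)$ with transitions $(\ell,\mathtt{u}_\mathcal{P}(\ell),\mathtt{g}_\mathcal{P}(\ell'),\ell')$ whenever $\ell'=\ell+1<|\mathcal{P}|$, or $\ell'<\ell$ and $\{\ell',\dots,\ell\}=\mathtt{loc}_\mathcal{P}(k)$ for a loop $P_k$; $\mathtt{succ}_\mathcal{P}(\ell)$ are the one-step successors. $\mathtt{Runs}(\mathcal{P})$: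 runs of $\mathtt{CS}(\mathcal{P})$ visiting every location at least once. For $\sigma\in\mathtt{Runs}(\mathcal{P})$, $(\sigma,i)\models_\mathcal{P}\varphi$ iff $(\mathtt{st}_\mathcal{P}(\sigma),i)\models\varphi$, where $\mathtt{st}_\mathcal{P}(\sigma)$ is the state sequence $\mathtt{st}(\mathcal{P}[\sigma(0)])\mathtt{st}(\mathcal{P}[\sigma(1)])\dots$. For $\Psi=\alpha\,\mathtt{U}^{\frac{x}{y}}\beta$, an augmented path $u$ is good/neutral/bad for $\Psi$ if $|\{i<|u|\mid\alpha\in\mathtt{lab}(u(i))\}|$ is $>,=,<\frac{x}{y}|u|$. A tuple of augmented paths is $L$-periodic if all have the same length and for every index $i$ the sets $\mathtt{lab}(P(i))\cap L$ coincide over all members $P$. Consistency: for $\ell\in\mathtt{loc}_\mathcal{P}(k)$, $\ell$ is consistent w.r.t. $\Psi$ if all locations are consistent w.r.t. all strict subformulae of $\Psi$ and: (1) $\Psi\in AP$ and ($\Psi\in\mathtt{lab}_\mathcal{P}(\ell)\Leftrightarrow\Psi\in\lambda(\mathtt{st}_\mathcal{P}(\ell))$), or $\Psi=\alpha\land\beta$ and ($\Psi\in\mathtt{lab}_\mathcal{P}(\ell)\Leftrightarrow\alpha,\beta\in\mathtt{lab}_\mathcal{P}(\ell)$), or $\Psi=\neg\alpha$ and ($\Psi\in\mathtt{lab}_\mathcal{P}(\ell)\Leftrightarrow\alpha\notin\mathtt{lab}_\mathcal{P}(\ell)$); (2) $\Psi=\mathtt{X}\alpha$ and for all $\ell'\in\mathtt{succ}_\mathcal{P}(\ell)$: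 $\Psi\in\mathtt{lab}_\mathcal{P}(\ell)\Leftrightarrow\alpha\in\mathtt{lab}_\mathcal{P}(\ell')$; (3) $\Psi=\alpha\,\mathtt{U}^{\frac{x}{y}}\beta$ and one of: (a) $\Psi,\beta\in\mathtt{lab}_\mathcal{P}(\ell)$; (b) $\Psi\in\mathtt{lab}_\mathcal{P}(\ell)$, the last component is good for $\Psi$ and contains a location labelled $\beta$; (c) $\mathtt{t}_\mathcal{P}(\ell)=\mathtt{R}$ and some counter $c$ has update $0$ at all $\ell'<\ell$, $y-x$ at all $\ell'\ge\ell$ labelled $\alpha$, $-x$ at all $\ell'\ge\ell$ not labelled $\alpha$, and: if $\Psi\notin\mathtt{lab}_\mathcal{P}(\ell)$ then $\beta\notin\mathtt{lab}_\mathcal{P}(\ell)$ and every $\ell'>\ell$ labelled $\beta$ has $(c<0)\in\mathtt{g}_\mathcal{P}(\ell')$; if $\Psi\in\mathtt{lab}_\mathcal{P}(\ell)$ then some $\ell'>\ell$ labelled $\beta$ has $(c\ge0)\in\mathtt{g}_\mathcal{P}(\ell')$; (d) some component $P_{k'}$ has all locations consistent w.r.t. $\Psi$ and: if $P_k$ is the last component then $k'<k$ and $(P_{k'},\dots,P_k)$ is $\{\alpha,\beta,\Psi\}$-periodic; if $P_k$ is not last and ($P_k$ good/neutral and $\Psi\notin\mathtt{lab}_\mathcal{P}(\ell)$, or $P_k$ bad and $\Psi\in\mathtt{lab}_\mathcal{P}(\ell)$) then $k'<k$ and $(P_{k'},\dots,P_{k+1})$ is periodic; if $P_k$ is not last and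 ($P_k$ good/neutral and $\Psi\in\mathtt{lab}_\mathcal{P}(\ell)$, or $P_k$ bad and $\Psi\notin\mathtt{lab}_\mathcal{P}(\ell)$) then $k<k'$, $P_{k'}$ not last, and $(P_k,\dots,P_{k'+1})$ is periodic. $\mathcal{P}$ is consistent w.r.t. $\Psi$ if all its locations are. *)

theory Defs
  imports Main
begin

definition kripke :: "'s set \<Rightarrow> 's \<Rightarrow> ('s \<times> 's) set \<Rightarrow> ('s \<Rightarrow> 'ap set) \<Rightarrow> 'ap set \<Rightarrow> bool" where
  "kripke S sI E lam AP \<longleftrightarrow> finite S \<and> sI \<in> S \<and> E \<subseteq> S \<times> S \<and> finite AP \<and> (\<forall>s\<in>S. lam s \<subseteq> AP)"

definition simple_loop :: "'s set \<Rightarrow> ('s \<times> 's) set \<Rightarrow> 's list \<Rightarrow> bool" where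
  "simple_loop S E xs \<longleftrightarrow> xs \<noteq> [] \<and> distinct xs \<and> set xs \<subseteq> S
     \<and> (\<forall>i. Suc i < length xs \<longrightarrow> (xs ! i, xs ! Suc i) \<in> E)
     \<and> (last xs, hd xs) \<in> E"

definition flat_kripke :: "'s set \<Rightarrow> ('s \<times> 's) set \<Rightarrow> bool" where
  "flat_kripke S E \<longleftrightarrow> (\<forall>s. \<forall>xs ys. simple_loop S E xs \<and> simple_loop S E ys \<and> hd xs = s \<and> hd ys = s \<longrightarrow> xs = ys)"

datatype 'ap fltl =
    Prop 'ap
  | And "'ap fltl" "'ap fltl"
  | Not "'ap fltl"
  | Next "'ap fltl"
  | Until "'ap fltl" nat nat "'ap fltl"

text \<open>Until a x y b is a U^{x/y} b.\<close>

fun subf :: "'ap fltl \<Rightarrow> 'ap fltl set" where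
  "subf (Prop p) = {Prop p}"
| "subf (And a b) = insert (And a b) (subf a \<union> subf b)"
| "subf (Not a) = insert (Not a) (subf a)"
| "subf (Next a) = insert (Next a) (subf a)"
| "subf (Until a x y b) = insert (Until a x y b) (subf a \<union> subf b)"

definition strict_subf :: "'ap fltl \<Rightarrow> 'ap fltl set" where
  "strict_subf f = subf f - {f}"

definition sub :: "'ap set \<Rightarrow> 'ap fltl \<Rightarrow> 'ap fltl set" where
  "sub AP f = subf f \<union> Prop ` AP"

fun wf_fltl :: "'ap fltl \<Rightarrow> bool" where
  "wf_fltl (Prop p) = True"
| "wf_fltl (And a b) = (wf_fltl a \<and> wf_fltl b)"
| "wf_fltl (Not a) = wf_fltl a"
| "wf_fltl (Next a) = wf_fltl a"
| "wf_fltl (Until a x y b) = (x \<le> y \<and> 0 < y \<and> wf_fltl a \<and> wf_fltl b)"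

fun sat :: "('s \<Rightarrow> 'ap set) \<Rightarrow> (nat \<Rightarrow> 's) \<Rightarrow> nat \<Rightarrow> 'ap fltl \<Rightarrow> bool" where
  "sat lam \<rho> i (Prop p) = (p \<in> lam (\<rho> i))"
| "sat lam \<rho> i (And a b) = (sat lam \<rho> i a \<and> sat lam \<rho> i b)"
| "sat lam \<rho> i (Not a) = (\<not> sat lam \<rho> i a)"
| "sat lam \<rho> i (Next a) = sat lam \<rho> (Suc i) a"
| "sat lam \<rho> i (Until a x y b) =
     (sat lam \<rho> i b \<or>
      (\<exists>k\<ge>i. sat lam \<rho> (Suc k) b \<and>
              y * card {j \<in> {i..k}. sat lam \<rho> j a} \<ge> x * (k - i + 1)))"

datatype 'c guard = Neg 'c | NonNeg 'c

fun guard_holds :: "('c \<Rightarrow> int) \<Rightarrow> 'c guard \<Rightarrow> bool" where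
  "guard_holds \<theta> (Neg c) = (\<theta> c < 0)"
| "guard_holds \<theta> (NonNeg c) = (\<theta> c \<ge> 0)"

datatype ltype = L | R

datatype ('s, 'ap, 'c) astate =
  AState (st: 's) (lab: "'ap fltl set") (grd: "'c guard set") (upd: "'c \<Rightarrow> int") (atype: ltype)

type_synonym ('s, 'ap, 'c) apath = "('s, 'ap, 'c) astate list"

definition is_row :: "('s, 'ap, 'c) apath \<Rightarrow> bool" where
  "is_row p \<longleftrightarrow> p \<noteq> [] \<and> (\<forall>a\<in>set p. atype a = R)"

definition is_loop :: "('s \<times> 's) set \<Rightarrow> ('s, 'ap, 'c) apath \<Rightarrow> bool" where
  "is_loop E p \<longleftrightarrow> p \<noteq> [] \<and> (st (last p), st (hd p)) \<in> E \<and> distinct (map st p)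
     \<and> (\<forall>a\<in>set p. atype a = L)"

definition is_apath :: "('s \<times> 's) set \<Rightarrow> ('s, 'ap, 'c) apath \<Rightarrow> bool" where
  "is_apath E p \<longleftrightarrow> p \<noteq> [] \<and> (\<forall>i. Suc i < length p \<longrightarrow> (st (p ! i), st (p ! Suc i)) \<in> E)"

text \<open>An augmented path schema (P_0,...,P_m) in K, augmented states over sub(Phi)
  (the counter set C is the finite type 'c).\<close>
definition is_aps :: "'s set \<Rightarrow> ('s \<times> 's) set \<Rightarrow> 'ap set \<Rightarrow> 'ap fltl \<Rightarrow> ('s, 'ap, 'c) apath list \<Rightarrow> bool" where
  "is_aps S E AP \<Phi> Ps \<longleftrightarrow> Ps \<noteq> []
     \<and> (\<forall>P\<in>set Ps. is_row P \<or> is_loop E P)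
     \<and> is_loop E (last Ps)
     \<and> is_apath E (concat Ps)
     \<and> (\<forall>a\<in>set (concat Ps). st a \<in> S \<and> lab a \<subseteq> sub AP \<Phi>)"

definition aps_len :: "('s, 'ap, 'c) apath list \<Rightarrow> nat" where
  "aps_len Ps = length (concat Ps)"

definition aps_at :: "('s, 'ap, 'c) apath list \<Rightarrow> nat \<Rightarrow> ('s, 'ap, 'c) astate" where
  "aps_at Ps l = concat Ps ! l"

definition comp_start :: "('s, 'ap, 'c) apath list \<Rightarrow> nat \<Rightarrow> nat" where
  "comp_start Ps k = length (concat (take k Ps))"

definition loc :: "('s, 'ap, 'c) apath list \<Rightarrow> nat \<Rightarrow> nat set" where
  "loc Ps k = {comp_start Ps k ..< comp_start Ps k + length (Ps ! k)}"

text \<open>Transitions of CS(P) (the update of the transition is upd at the source,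
  the guards are those of the target).\<close>
definition cs_trans :: "('s \<times> 's) set \<Rightarrow> ('s, 'ap, 'c) apath list \<Rightarrow> nat \<Rightarrow> nat \<Rightarrow> bool" where
  "cs_trans E Ps l l' \<longleftrightarrow>
     (l' = Suc l \<and> l' < aps_len Ps) \<or>
     (l' < l \<and> (\<exists>k<length Ps. is_loop E (Ps ! k) \<and> {l'..l} = loc Ps k))"

definition succ :: "('s \<times> 's) set \<Rightarrow> ('s, 'ap, 'c) apath list \<Rightarrow> nat \<Rightarrow> nat set" where
  "succ E Ps l = {l'. cs_trans E Ps l l'}"

definition cs_run :: "('s \<times> 's) set \<Rightarrow> ('s, 'ap, 'c) apath list \<Rightarrow> (nat \<Rightarrow> nat) \<Rightarrow> bool" where
  "cs_run E Ps \<sigma> \<longleftrightarrow> \<sigma> 0 = 0 \<and>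
     (\<exists>\<theta> :: nat \<Rightarrow> 'c \<Rightarrow> int. \<theta> 0 = (\<lambda>c. 0) \<and>
        (\<forall>i. cs_trans E Ps (\<sigma> i) (\<sigma> (Suc i))
             \<and> \<theta> (Suc i) = (\<lambda>c. \<theta> i c + upd (aps_at Ps (\<sigma> i)) c)
             \<and> (\<forall>g\<in>grd (aps_at Ps (\<sigma> (Suc i))). guard_holds (\<theta> (Suc i)) g)))"

definition Runs :: "('s \<times> 's) set \<Rightarrow> ('s, 'ap, 'c) apath list \<Rightarrow> (nat \<Rightarrow> nat) set" where
  "Runs E Ps = {\<sigma>. cs_run E Ps \<sigma> \<and> (\<forall>l<aps_len Ps. \<exists>i. \<sigma> i = l)}"

definition sat_P :: "('s \<Rightarrow> 'ap set) \<Rightarrow> ('s, 'ap, 'c) apath list \<Rightarrow> (nat \<Rightarrow> nat) \<Rightarrow> nat \<Rightarrow> 'ap fltl \<Rightarrow> bool" where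
  "sat_P lam Ps \<sigma> i f = sat lam (\<lambda>j. st (aps_at Ps (\<sigma> j))) i f"

definition count_lab :: "'ap fltl \<Rightarrow> ('s, 'ap, 'c) apath \<Rightarrow> nat" where
  "count_lab a u = card {i. i < length u \<and> a \<in> lab (u ! i)}"

definition good :: "nat \<Rightarrow> nat \<Rightarrow> 'ap fltl \<Rightarrow> ('s, 'ap, 'c) apath \<Rightarrow> bool" where
  "good x y a u \<longleftrightarrow> y * count_lab a u > x * length u"
definition neutral :: "nat \<Rightarrow> nat \<Rightarrow> 'ap fltl \<Rightarrow> ('s, 'ap, 'c) apath \<Rightarrow> bool" where
  "neutral x y a u \<longleftrightarrow> y * count_lab a u = x * length u"
definition bad :: "nat \<Rightarrow> nat \<Rightarrow> 'ap fltl \<Rightarrow> ('s, 'ap, 'c) apath \<Rightarrow> bool" where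
  "bad x y a u \<longleftrightarrow> y * count_lab a u < x * length u"

definition periodic :: "'ap fltl set \<Rightarrow> ('s, 'ap, 'c) apath list \<Rightarrow> bool" where
  "periodic Lset Qs \<longleftrightarrow>
     (\<forall>P\<in>set Qs. \<forall>Q\<in>set Qs. length P = length Q \<and>
        (\<forall>i<length P. lab (P ! i) \<inter> Lset = lab (Q ! i) \<inter> Lset))"

definition comps :: "('s, 'ap, 'c) apath list \<Rightarrow> nat \<Rightarrow> nat \<Rightarrow> ('s, 'ap, 'c) apath list" where
  "comps Ps a b = take (Suc b - a) (drop a Ps)"

text \<open>Consistency of a location w.r.t. a formula, read as the least fixed point
  (inductive definition) of the clauses (1), (2), (3)(a)-(d).\<close>
inductive consistent_loc ::
  "('s \<Rightarrow> 'ap set) \<Rightarrow> ('s \<times> 's) set \<Rightarrow> ('s, 'ap, 'c) apath list \<Rightarrow> 'ap fltl \<Rightarrow> nat \<Rightarrow> bool"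
  for lam E Ps where
  cons_prop:
    "\<lbrakk> k < length Ps; l \<in> loc Ps k;
       (Prop p \<in> lab (aps_at Ps l) \<longleftrightarrow> p \<in> lam (st (aps_at Ps l))) \<rbrakk>
     \<Longrightarrow> consistent_loc lam E Ps (Prop p) l"
| cons_and:
    "\<lbrakk> k < length Ps; l \<in> loc Ps k;
       \<forall>f\<in>strict_subf (And a b). \<forall>l'<aps_len Ps. consistent_loc lam E Ps f l';
       (And a b \<in> lab (aps_at Ps l) \<longleftrightarrow> a \<in> lab (aps_at Ps l) \<and> b \<in> lab (aps_at Ps l)) \<rbrakk>
     \<Longrightarrow> consistent_loc lam E Ps (And a b) l"
| cons_not:
    "\<lbrakk> k < length Ps; l \<in> loc Ps k;
       \<forall>f\<in>strict_subf (Not a). \<forall>l'<aps_len Ps. consistent_loc lam E Ps f l';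
       (Not a \<in> lab (aps_at Ps l) \<longleftrightarrow> a \<notin> lab (aps_at Ps l)) \<rbrakk>
     \<Longrightarrow> consistent_loc lam E Ps (Not a) l"
| cons_next:
    "\<lbrakk> k < length Ps; l \<in> loc Ps k;
       \<forall>f\<in>strict_subf (Next a). \<forall>l'<aps_len Ps. consistent_loc lam E Ps f l';
       \<forall>l'\<in>succ E Ps l. (Next a \<in> lab (aps_at Ps l) \<longleftrightarrow> a \<in> lab (aps_at Ps l')) \<rbrakk>
     \<Longrightarrow> consistent_loc lam E Ps (Next a) l"
| cons_until_a:
    "\<lbrakk> k < length Ps; l \<in> loc Ps k;
       \<forall>f\<in>strict_subf (Until a x y b). \<forall>l'<aps_len Ps. consistent_loc lam E Ps f l';
       Until a x y b \<in> lab (aps_at Ps l); b \<in> lab (aps_at Ps l) \<rbrakk>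
     \<Longrightarrow> consistent_loc lam E Ps (Until a x y b) l"
| cons_until_b:
    "\<lbrakk> k < length Ps; l \<in> loc Ps k;
       \<forall>f\<in>strict_subf (Until a x y b). \<forall>l'<aps_len Ps. consistent_loc lam E Ps f l';
       Until a x y b \<in> lab (aps_at Ps l);
       good x y a (last Ps);
       \<exists>q\<in>set (last Ps). b \<in> lab q \<rbrakk>
     \<Longrightarrow> consistent_loc lam E Ps (Until a x y b) l"
| cons_until_c:
    "\<lbrakk> k < length Ps; l \<in> loc Ps k;
       \<forall>f\<in>strict_subf (Until a x y b). \<forall>l'<aps_len Ps. consistent_loc lam E Ps f l';
       atype (aps_at Ps l) = R;
       (\<forall>l'<l. upd (aps_at Ps l') c = 0);
       (\<forall>l'. l \<le> l' \<and> l' < aps_len Ps \<and> a \<in> lab (aps_at Ps l') \<longrightarrow>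
              upd (aps_at Ps l') c = int y - int x);
       (\<forall>l'. l \<le> l' \<and> l' < aps_len Ps \<and> a \<notin> lab (aps_at Ps l') \<longrightarrow>
              upd (aps_at Ps l') c = - int x);
       (Until a x y b \<notin> lab (aps_at Ps l) \<longrightarrow>
          b \<notin> lab (aps_at Ps l) \<and>
          (\<forall>l'. l < l' \<and> l' < aps_len Ps \<and> b \<in> lab (aps_at Ps l') \<longrightarrow> Neg c \<in> grd (aps_at Ps l')));
       (Until a x y b \<in> lab (aps_at Ps l) \<longrightarrow>
          (\<exists>l'. l < l' \<and> l' < aps_len Ps \<and> b \<in> lab (aps_at Ps l') \<and> NonNeg c \<in> grd (aps_at Ps l'))) \<rbrakk>
     \<Longrightarrow> consistent_loc lam E Ps (Until a x y b) l"
| cons_until_d: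
    "\<lbrakk> k < length Ps; l \<in> loc Ps k;
       \<forall>f\<in>strict_subf (Until a x y b). \<forall>l'<aps_len Ps. consistent_loc lam E Ps f l';
       k' < length Ps;
       \<forall>l'\<in>loc Ps k'. consistent_loc lam E Ps (Until a x y b) l';
       (Suc k = length Ps \<longrightarrow>
          k' < k \<and> periodic {a, b, Until a x y b} (comps Ps k' k));
       (Suc k < length Ps \<and>
        (((good x y a (Ps ! k) \<or> neutral x y a (Ps ! k)) \<and> Until a x y b \<notin> lab (aps_at Ps l)) \<or>
         (bad x y a (Ps ! k) \<and> Until a x y b \<in> lab (aps_at Ps l))) \<longrightarrow>
          k' < k \<and> periodic {a, b, Until a x y b} (comps Ps k' (Suc k)));
       (Suc k < length Ps \<and>
        (((good x y a (Ps ! k) \<or> neutral x y a (Ps ! k)) \<and> Until a x y b \<in> lab (aps_at Ps l)) \<or>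
         (bad x y a (Ps ! k) \<and> Until a x y b \<notin> lab (aps_at Ps l))) \<longrightarrow>
          k < k' \<and> Suc k' < length Ps \<and> periodic {a, b, Until a x y b} (comps Ps k (Suc k'))) \<rbrakk>
     \<Longrightarrow> consistent_loc lam E Ps (Until a x y b) l"

definition consistent :: "('s \<Rightarrow> 'ap set) \<Rightarrow> ('s \<times> 's) set \<Rightarrow> ('s, 'ap, 'c) apath list \<Rightarrow> 'ap fltl \<Rightarrow> bool" where
  "consistent lam E Ps f \<longleftrightarrow> (\<forall>l<aps_len Ps. consistent_loc lam E Ps f l)"

end

theory Submission
  imports Defs
begin

text \<open>
  Read \<open>a U\<^bsup>x/y\<^esup> b\<close> at position \<open>i\<close> as: some \<open>p \<ge> i\<close> satisfies \<open>b\<close>, and the counter that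
  gains \<open>y - x\<close> at positions satisfying \<open>a\<close> and loses \<open>x\<close> elsewhere is at least as large at
  \<open>p\<close> as at \<open>i\<close>. Consistency makes the labels sound along every run, so while the run
  repeats the loop \<open>P\<close>, the truth values of \<open>\<phi>\<close> and \<open>\<psi>\<close>, and with them the counter
  increments, are \<open>|P|\<close>-periodic. Inside this window a witness for position \<open>i\<close> either lies
  within one period of \<open>i\<close>, or it can be moved beyond the window (if a period gains) or
  back to the first period after \<open>i\<close> (if it loses). The first alternative is invariant under
  shifting \<open>i\<close> by one period; the second is a threshold condition on the counter value at
  \<open>i\<close>, which moves by the same amount every period and varies by at most \<open>|P| y\<close> within a
  period. Hence the truth value of \<open>\<Phi>\<close> can fail to be \<open>|P|\<close>-periodic only in a block of
  \<open>|P| y\<close> consecutive periods.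
\<close>

section \<open>Ratio until as a counter condition\<close>

definition weight :: "nat \<Rightarrow> nat \<Rightarrow> bool \<Rightarrow> int" where
  "weight x y b = (if b then int y - int x else - int x)"

text \<open>\<open>gain A x y\<close> is the counter of consistency clause (3c), started at position 0.\<close>

definition gain :: "(nat \<Rightarrow> bool) \<Rightarrow> nat \<Rightarrow> nat \<Rightarrow> nat \<Rightarrow> int" where
  "gain A x y p = (\<Sum>t<p. weight x y (A t))"

definition frac_until :: "(nat \<Rightarrow> bool) \<Rightarrow> (nat \<Rightarrow> bool) \<Rightarrow> nat \<Rightarrow> nat \<Rightarrow> nat \<Rightarrow> bool" where
  "frac_until A B x y i \<longleftrightarrow> (\<exists>p\<ge>i. B p \<and> gain A x y i \<le> gain A x y p)"

lemma gain_Suc [simp]: "gain A x y (Suc p) = gain A x y p + weight x y (A p)"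
  by (simp add: gain_def)

lemma sum_weight:
  "finite T \<Longrightarrow> (\<Sum>j\<in>T. weight x y (P j)) = int y * int (card {j\<in>T. P j}) - int x * int (card T)"
proof (induction rule: finite_induct)
  case (insert a T)
  have "{j \<in> insert a T. P j} = (if P a then insert a {j\<in>T. P j} else {j\<in>T. P j})"
    by auto
  with insert show ?case
    by (simp add: weight_def algebra_simps)
qed simp

lemma sum_weight_count_lab:
  "(\<Sum>j<length u. weight x y (a \<in> lab (u ! j))) =
     int y * int (count_lab a u) - int x * int (length u)"
  unfolding count_lab_def by (simp add: sum_weight)

lemma gain_add: "gain A x y (i + d) - gain A x y i = (\<Sum>e<d. weight x y (A (i + e)))"
  by (induction d) simp_all

lemma gain_diff:
  assumes "i \<le> p"
  shows "gain A x y p - gain A x y i = int y * int (card {j\<in>{i..<p}. A j}) - int x * int (p - i)"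
proof -
  have "gain A x y p - gain A x y i = (\<Sum>j\<in>{i..<p}. weight x y (A j))"
    using sum.atLeastLessThan_concat[of 0 i p "\<lambda>t. weight x y (A t)"] assms
    by (simp add: gain_def lessThan_atLeast0)
  then show ?thesis
    by (simp add: sum_weight)
qed

lemma gain_lower: "i \<le> p \<Longrightarrow> - (int x * int (p - i)) \<le> gain A x y p - gain A x y i"
  by (simp add: gain_diff)

lemma gain_bound:
  assumes "x \<le> y" "i \<le> p"
  shows "\<bar>gain A x y p - gain A x y i\<bar> \<le> int y * int (p - i)"
proof -
  have "card {j\<in>{i..<p}. A j} \<le> p - i"
    by (rule order_trans[OF card_mono[of "{i..<p}"]]) auto
  then have "int y * int (card {j\<in>{i..<p}. A j}) \<le> int y * int (p - i)"
    by (simp add: mult_left_mono)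
  moreover have "int x * int (p - i) \<le> int y * int (p - i)"
    using assms(1) by (simp add: mult_right_mono)
  moreover have "0 \<le> int y * int (card {j\<in>{i..<p}. A j})" "0 \<le> int x * int (p - i)"
    by simp_all
  ultimately show ?thesis
    unfolding gain_diff[OF assms(2)] abs_le_iff by (intro conjI; linarith)
qed

lemma sat_Until_iff_frac_until:
  "sat lam \<rho> i (Until a x y b) \<longleftrightarrow> frac_until (\<lambda>t. sat lam \<rho> t a) (\<lambda>t. sat lam \<rho> t b) x y i"
proof -
  let ?A = "\<lambda>t. sat lam \<rho> t a"
  have ratio: "x * (k - i + 1) \<le> y * card {j\<in>{i..k}. ?A j} \<longleftrightarrow>
      gain ?A x y i \<le> gain ?A x y (Suc k)" if "i \<le> k" for k
  proof -
    let ?c = "card {j\<in>{i..k}. ?A j}"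
    have "{j\<in>{i..k}. ?A j} = {j\<in>{i..<Suc k}. ?A j}" "Suc k - i = k - i + 1"
      using that by auto
    then have "gain ?A x y (Suc k) - gain ?A x y i = int (y * ?c) - int (x * (k - i + 1))"
      using gain_diff[of i "Suc k" ?A x y] that by (simp only: of_nat_mult)
    moreover have "x * (k - i + 1) \<le> y * ?c \<longleftrightarrow> int (x * (k - i + 1)) \<le> int (y * ?c)"
      by (rule of_nat_le_iff[symmetric])
    ultimately show ?thesis
      by linarith
  qed
  show ?thesis
  proof
    assume "sat lam \<rho> i (Until a x y b)"
    then consider "sat lam \<rho> i b"
      | k where "i \<le> k" "sat lam \<rho> (Suc k) b" "x * (k - i + 1) \<le> y * card {j\<in>{i..k}. ?A j}"
      by auto
    then show "frac_until ?A (\<lambda>t. sat lam \<rho> t b) x y i"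
      unfolding frac_until_def by cases (use ratio le_SucI in blast)+
  next
    assume "frac_until ?A (\<lambda>t. sat lam \<rho> t b) x y i"
    then obtain p where p: "i \<le> p" "sat lam \<rho> p b" "gain ?A x y i \<le> gain ?A x y p"
      unfolding frac_until_def by blast
    show "sat lam \<rho> i (Until a x y b)"
    proof (cases "p = i")
      case False
      then obtain k where "p = Suc k" "i \<le> k"
        using p(1) by (cases p) auto
      then show ?thesis
        using p ratio by auto
    qed (use p in simp)
  qed
qed

lemma sat_P_Until_iff_frac_until:
  "sat_P lam Ps \<sigma> i (Until a x y b) \<longleftrightarrow>
     frac_until (\<lambda>t. sat_P lam Ps \<sigma> t a) (\<lambda>t. sat_P lam Ps \<sigma> t b) x y i"
  unfolding sat_P_def by (rule sat_Until_iff_frac_until)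

lemma strict_subf_Until: "a \<in> strict_subf (Until a x y b)" "b \<in> strict_subf (Until a x y b)"
  and strict_subf_And: "a \<in> strict_subf (And a b)" "b \<in> strict_subf (And a b)"
  and strict_subf_Not: "a \<in> strict_subf (Not a)"
  and strict_subf_Next: "a \<in> strict_subf (Next a)"
  by (cases a; cases b; auto simp: strict_subf_def)+

lemma frac_until_shift_eq:
  assumes "\<And>d. A (i + d) = A (j + d)" "\<And>d. B (i + d) = B (j + d)"
  shows "frac_until A B x y i = frac_until A B x y j"
proof -
  have gain_eq: "gain A x y (i + d) - gain A x y i = gain A x y (j + d) - gain A x y j" for d
    unfolding gain_add using assms(1) by simp
  have "gain A x y i \<le> gain A x y (i + d) \<longleftrightarrow> gain A x y j \<le> gain A x y (j + d)" for d
    using gain_eq[of d] by linarith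
  moreover have "frac_until A B x y k \<longleftrightarrow> (\<exists>d. B (k + d) \<and> gain A x y k \<le> gain A x y (k + d))" for k
    unfolding frac_until_def le_iff_add by auto
  ultimately show ?thesis
    using assms(2) by simp
qed

section \<open>Periodic windows\<close>

definition shift_periodic :: "nat \<Rightarrow> nat \<Rightarrow> nat \<Rightarrow> (nat \<Rightarrow> 'a) \<Rightarrow> bool" where
  "shift_periodic m s e f \<longleftrightarrow> (\<forall>t. s \<le> t \<longrightarrow> t < e \<longrightarrow> f (t + m) = f t)"

lemma shift_periodic_compose: "shift_periodic m s e f \<Longrightarrow> shift_periodic m s e (\<lambda>t. g (f t))"
  by (simp add: shift_periodic_def)

lemma shift_periodic_multiple:
  assumes "shift_periodic m s e f" "s \<le> t" "t + j * m < e + m"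
  shows "f (t + j * m) = f t"
  using assms(3)
proof (induction j)
  case (Suc j)
  then have "f (t + j * m + m) = f (t + j * m)"
    using assms(1,2) unfolding shift_periodic_def by simp
  then show ?case
    using Suc by (simp add: algebra_simps)
qed simp

lemma gain_shift_periodic:
  assumes "shift_periodic m s e A" "s \<le> p" "p \<le> e"
  shows "gain A x y (p + m) - gain A x y p = gain A x y (s + m) - gain A x y s"
  using assms(2,3)
proof (induction p rule: dec_induct)
  case (step p)
  then have "A (p + m) = A p"
    using assms(1) unfolding shift_periodic_def by simp
  then show ?case
    using step by simp
qed simp

lemma gain_shift_multiple:
  assumes "shift_periodic m s e A" "s \<le> t" "t + j * m \<le> e + m"
  shows "gain A x y (t + j * m) - gain A x y t = int j * (gain A x y (s + m) - gain A x y s)"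
  using assms(3)
proof (induction j)
  case (Suc j)
  have "gain A x y (t + j * m + m) - gain A x y (t + j * m) = gain A x y (s + m) - gain A x y s"
    using assms(2) Suc.prems by (intro gain_shift_periodic[OF assms(1)]) auto
  then show ?case
    using Suc by (simp add: algebra_simps)
qed simp

lemma sum_rotate_mod:
  fixes f :: "nat \<Rightarrow> 'a::comm_monoid_add"
  assumes "0 < m"
  shows "(\<Sum>d<m. f ((c + d) mod m)) = (\<Sum>j<m. f j)"
proof (induction c)
  case 0
  show ?case
    by (intro sum.cong) auto
next
  case (Suc c)
  define g where "g d = f ((c + d) mod m)" for d
  obtain k where m: "m = Suc k"
    using assms by (cases m) auto
  have "g m = g 0"
    by (simp add: g_def)
  have "(\<Sum>d<m. g (Suc d)) = (\<Sum>d<k. g (Suc d)) + g m"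
    unfolding m by (rule sum.lessThan_Suc)
  also have "\<dots> = (\<Sum>d<m. g d)"
    unfolding m sum.lessThan_Suc_shift using \<open>g m = g 0\<close> m by (simp add: add.commute)
  finally show ?case
    using Suc by (simp add: g_def)
qed

lemma gain_rotated_period:
  assumes "0 < m" "\<And>d. d < m \<Longrightarrow> A (s + d) = h ((c + d) mod m)"
  shows "gain A x y (s + m) - gain A x y s = (\<Sum>j<m. weight x y (h j))"
proof -
  have "gain A x y (s + m) - gain A x y s = (\<Sum>d<m. weight x y (h ((c + d) mod m)))"
    unfolding gain_add using assms(2) by (intro sum.cong) auto
  also have "\<dots> = (\<Sum>j<m. weight x y (h j))"
    by (rule sum_rotate_mod[OF assms(1)])
  finally show ?thesis .
qed

lemma frac_until_from_later_period:
  assumes A: "shift_periodic m i (i + q * m) A"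
    and D: "0 \<le> gain A x y (i + m) - gain A x y i"
    and later: "frac_until A B x y (i + q * m)"
  shows "frac_until A B x y i"
proof -
  obtain p where p: "i + q * m \<le> p" "B p" "gain A x y (i + q * m) \<le> gain A x y p"
    using later unfolding frac_until_def by blast
  have "gain A x y (i + q * m) - gain A x y i = int q * (gain A x y (i + m) - gain A x y i)"
    by (rule gain_shift_multiple[OF A]) simp_all
  also have "\<dots> \<ge> 0"
    using D by simp
  finally show ?thesis
    unfolding frac_until_def using p by (intro exI[of _ p]) auto
qed

lemma frac_until_to_later_period:
  assumes A: "shift_periodic m i (i + q * m) A" and B: "shift_periodic m i (i + q * m) B"
    and m: "0 < m" and D: "gain A x y (i + m) - gain A x y i \<le> 0"
    and earlier: "frac_until A B x y i"
  shows "frac_until A B x y (i + q * m)"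
proof -
  let ?G = "gain A x y" and ?D = "gain A x y (i + m) - gain A x y i"
  obtain p where p: "i \<le> p" "B p" "?G i \<le> ?G p"
    using earlier unfolding frac_until_def by blast
  have later: "?G (i + q * m) - ?G i = int q * ?D"
    by (rule gain_shift_multiple[OF A]) simp_all
  show ?thesis
  proof (cases "i + q * m \<le> p")
    case True
    have "int q * ?D \<le> 0"
      using D by (simp add: mult_nonneg_nonpos)
    then show ?thesis
      unfolding frac_until_def using True p later by (intro exI[of _ p]) auto
  next
    case False
    \<comment> \<open>move the witness forward by whole periods into the last period of the window\<close>
    define q0 where "q0 = (p - i) div m"
    define p' where "p' = p + (q - q0) * m"
    have p_eq: "p = i + q0 * m + (p - i) mod m"
      unfolding q0_def using p(1) by simp
    have "q0 < q"
      using False p(1) m unfolding q0_def by (simp add: div_less_iff_less_mult)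
    then have "q0 * m + (q - q0) * m = q * m"
      by (simp flip: add_mult_distrib)
    then have p'_eq: "p' = i + q * m + (p - i) mod m"
      unfolding p'_def using p_eq by linarith
    have p'_bound: "p' < i + q * m + m"
      unfolding p'_eq using m by simp
    have "B p'"
      unfolding p'_def using shift_periodic_multiple[OF B p(1)] p'_bound p(2) by (simp add: p'_def)
    moreover have "?G p' - ?G p = int (q - q0) * ?D"
      unfolding p'_def by (rule gain_shift_multiple[OF A p(1)]) (use p'_bound p'_def in simp)
    moreover have "int q0 * ?D \<le> 0"
      using D by (simp add: mult_nonneg_nonpos)
    ultimately have "?G (i + q * m) \<le> ?G p'"
      using later p(3) \<open>q0 < q\<close> by (simp add: of_nat_diff algebra_simps)
    moreover have "i + q * m \<le> p'"
      unfolding p'_eq by simp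
    ultimately show ?thesis
      unfolding frac_until_def using \<open>B p'\<close> by blast
  qed
qed

context
  fixes A B :: "nat \<Rightarrow> bool" and s len n x y :: nat
  assumes len_pos: "0 < len"
    and A_periodic: "shift_periodic len s (s + (n - 1) * len) A"
    and B_periodic: "shift_periodic len s (s + (n - 1) * len) B"
begin

private definition "D = gain A x y (s + len) - gain A x y s"
private definition "last_start = s + (n - 1) * len"

private definition "reach_near i \<longleftrightarrow> (\<exists>p. i \<le> p \<and> p < i + len \<and> B p \<and> gain A x y i \<le> gain A x y p)"
private definition "reach_tail g \<longleftrightarrow> (\<exists>p\<ge>last_start. B p \<and> g \<le> gain A x y p)"

private definition defective_period :: "nat \<Rightarrow> bool" where
  "defective_period t \<longleftrightarrow>
     (\<exists>r<len. frac_until A B x y (s + t * len + r) \<noteq> frac_until A B x y (s + t * len + r + len))"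

private lemma window_bound: "r < len \<Longrightarrow> t < n \<Longrightarrow> s + r + t * len < s + (n - 1) * len + len"
  by (cases n) (auto dest: less_imp_Suc_add simp: algebra_simps)

private lemma B_from_first_period:
  assumes "r < len" "t < n"
  shows "B (s + t * len + r) = B (s + r)"
  using shift_periodic_multiple[OF B_periodic le_add1 window_bound[OF assms]]
  by (simp add: ac_simps)

private lemma gain_from_first_period:
  assumes "r < len" "t < n"
  shows "gain A x y (s + t * len + r) = gain A x y (s + r) + int t * D"
  using gain_shift_multiple[OF A_periodic le_add1 less_imp_le[OF window_bound[OF assms]],
      where x = x and y = y]
  unfolding D_def by (simp add: ac_simps diff_eq_eq)

private lemma reach_tail_antimono: "g \<le> g' \<Longrightarrow> reach_tail g' \<Longrightarrow> reach_tail g"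
  unfolding reach_tail_def by force

private lemma frac_until_split:
  assumes "s \<le> i" "i \<le> last_start"
  shows "frac_until A B x y i \<longleftrightarrow> reach_near i \<or> reach_tail (gain A x y i)"
proof
  assume "frac_until A B x y i"
  then obtain p where p: "i \<le> p" "B p" "gain A x y i \<le> gain A x y p"
    unfolding frac_until_def by blast
  consider "p < i + len" | "last_start \<le> p" | "i + len \<le> p" "p < last_start"
    by linarith
  then show "reach_near i \<or> reach_tail (gain A x y i)"
  proof cases
    case 3
    define t where "t = (p - s) div len"
    define r where "r = (p - s) mod len"
    have p_eq: "p = s + t * len + r" and r: "r < len"
      using p(1) assms(1) len_pos unfolding t_def r_def by auto
    have t: "t < n - 1"
      using 3(2) p_eq unfolding last_start_def
      by (metis add_lessD1 add_less_cancel_left mult_less_cancel2)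
    have Bp: "B p = B (s + r)" and Gp: "gain A x y p = gain A x y (s + r) + int t * D"
      using B_from_first_period[OF r, of t] gain_from_first_period[OF r, of t] t p_eq by auto
    \<comment> \<open>move the witness by whole periods: to the last period of the window if a period
      does not lose, otherwise back into the period right after \<open>i\<close>\<close>
    show ?thesis
    proof (cases "0 \<le> D")
      case True
      let ?p' = "s + (n - 1) * len + r"
      have "B ?p'" "gain A x y ?p' = gain A x y (s + r) + int (n - 1) * D"
        using B_from_first_period[OF r] gain_from_first_period[OF r] t p(2) Bp by auto
      moreover have "int t * D \<le> int (n - 1) * D"
        using True t by (intro mult_right_mono) auto
      ultimately have "reach_tail (gain A x y i)"
        unfolding reach_tail_def last_start_def using p(3) Gp by (intro exI[of _ ?p']) auto
      then show ?thesis ..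
    next
      case False
      define p' where "p' = i + (p - i) mod len"
      define j where "j = (p - i) div len"
      have p_eq': "p = p' + j * len"
        unfolding p'_def j_def using p(1) by simp
      have "B p' = B p"
        using shift_periodic_multiple[OF B_periodic, of p' j] assms(1) 3(2) p_eq'
        unfolding p'_def last_start_def by simp
      moreover have "gain A x y p - gain A x y p' = int j * D"
        using gain_shift_multiple[OF A_periodic, of p' j] assms(1) 3(2) p_eq'
        unfolding p'_def last_start_def D_def by simp
      moreover have "int j * D \<le> 0"
        using False by (simp add: mult_nonneg_nonpos)
      moreover have "i \<le> p'" "p' < i + len"
        unfolding p'_def using len_pos by simp_all
      ultimately have "reach_near i"
        unfolding reach_near_def using p by (intro exI[of _ p']) auto
      then show ?thesis ..
    qed
  qed (use p in \<open>auto simp: reach_near_def reach_tail_def\<close>)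
next
  assume "reach_near i \<or> reach_tail (gain A x y i)"
  then show "frac_until A B x y i"
    unfolding frac_until_def reach_near_def reach_tail_def using assms(2) by (meson order_trans)
qed

private lemma shift_by_period:
  assumes "s \<le> p" "p < last_start"
  shows "B (p + len) = B p" "gain A x y (p + len) = gain A x y p + D"
  using B_periodic gain_shift_periodic[OF A_periodic assms(1), where x=x and y=y] assms
  unfolding shift_periodic_def last_start_def D_def by auto

private lemma reach_near_shift:
  assumes "s \<le> i" "i + len \<le> last_start"
  shows "reach_near (i + len) \<longleftrightarrow> reach_near i"
proof -
  have i: "gain A x y (i + len) = gain A x y i + D"
    using shift_by_period(2)[of i] assms len_pos by simp
  have p: "B (p + len) = B p" "gain A x y (p + len) = gain A x y p + D"
    if "i \<le> p" "p < i + len" for p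
    using shift_by_period[of p] that assms by auto
  show ?thesis
  proof
    assume "reach_near (i + len)"
    then obtain p where "i + len \<le> p" "p < i + len + len" "B p"
      "gain A x y (i + len) \<le> gain A x y p"
      unfolding reach_near_def by blast
    moreover have "p = (p - len) + len"
      using calculation(1) by simp
    ultimately show "reach_near i"
      unfolding reach_near_def using i p[of "p - len"] by (intro exI[of _ "p - len"]) auto
  next
    assume "reach_near i"
    then obtain p where "i \<le> p" "p < i + len" "B p" "gain A x y i \<le> gain A x y p"
      unfolding reach_near_def by blast
    then show "reach_near (i + len)"
      unfolding reach_near_def using i p[of p] by (intro exI[of _ "p + len"]) auto
  qed
qed

private lemma frac_until_shift_change:
  assumes "s \<le> i" "i + len \<le> last_start"
    and "frac_until A B x y i \<noteq> frac_until A B x y (i + len)"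
  shows "reach_tail (gain A x y i) \<noteq> reach_tail (gain A x y i + D)"
  using assms frac_until_split[of i] frac_until_split[of "i + len"] reach_near_shift
    shift_by_period(2)[of i] len_pos by auto

private lemma defective_period_tail_flip:
  assumes "defective_period t" "t + 3 \<le> n"
  obtains r where "r < len"
    "reach_tail (gain A x y (s + r) + int t * D) \<noteq> reach_tail (gain A x y (s + r) + int t * D + D)"
proof -
  obtain r where r: "r < len"
    and change: "frac_until A B x y (s + t * len + r) \<noteq> frac_until A B x y (s + t * len + r + len)"
    using assms(1) unfolding defective_period_def by blast
  have "t * len + r + len \<le> (t + 2) * len"
    using r by simp
  also have "\<dots> \<le> (n - 1) * len"
    using assms(2) by (intro mult_right_mono) auto
  finally have "s + t * len + r + len \<le> last_start"
    unfolding last_start_def by simp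
  then show ?thesis
    using that[OF r] frac_until_shift_change[OF _ _ change] gain_from_first_period[OF r, of t]
      assms(2)
    by simp
qed

text \<open>
  At a defective period \<open>t\<close> the antitone predicate \<open>reach_tail\<close> flips between some counter
  value \<open>g\<close> and \<open>g + D\<close>, where \<open>g\<close> lies within \<open>len * y\<close> of \<open>gain A x y s + t * D\<close>. Two such
  flips more than \<open>len * y\<close> periods apart are incompatible.
\<close>

private lemma defective_periods_close:
  assumes "x \<le> y" and t1: "defective_period t1" and t2: "defective_period t2" "t2 + 3 \<le> n"
    and "t1 \<le> t2"
  shows "t2 \<le> t1 + len * y"
proof (rule ccontr)
  assume far: "\<not> t2 \<le> t1 + len * y"
  obtain r1 where r1: "r1 < len"
    "reach_tail (gain A x y (s + r1) + int t1 * D) \<noteq>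
     reach_tail (gain A x y (s + r1) + int t1 * D + D)"
    using defective_period_tail_flip[OF t1] t2(2) assms(5) by auto
  obtain r2 where r2: "r2 < len"
    "reach_tail (gain A x y (s + r2) + int t2 * D) \<noteq>
     reach_tail (gain A x y (s + r2) + int t2 * D + D)"
    using defective_period_tail_flip[OF t2] by auto
  define g1 where "g1 = gain A x y (s + r1) + int t1 * D"
  define g2 where "g2 = gain A x y (s + r2) + int t2 * D"
  define d where "d = int t2 - int t1 - 1"
  have bound: "\<bar>gain A x y (s + r2) - gain A x y (s + r1)\<bar> \<le> int y * int len"
  proof -
    have "\<bar>gain A x y (s + r2) - gain A x y (s + r1)\<bar> \<le> int y * int (max r1 r2 - min r1 r2)"
      using gain_bound[OF assms(1), of "s + min r1 r2" "s + max r1 r2" A]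
      by (cases "r1 \<le> r2") (simp_all add: abs_minus_commute max_def min_def)
    also have "\<dots> \<le> int y * int len"
      using r1(1) r2(1) by (intro mult_left_mono) auto
    finally show ?thesis .
  qed
  have d: "int y * int len \<le> d"
  proof -
    have "int (t1 + y * len) < int t2"
      using far by (simp only: of_nat_less_iff not_le mult.commute)
    then show ?thesis
      unfolding d_def by simp
  qed
  have "0 \<le> int y * int len"
    by simp
  with d have d_nonneg: "0 \<le> d"
    by linarith
  have gap: "g2 - (g1 + D) = (gain A x y (s + r2) - gain A x y (s + r1)) + d * D"
    unfolding g1_def g2_def d_def by (simp add: algebra_simps)
  show False
  proof (cases "0 \<le> D")
    case True
    then have "\<not> reach_tail (g1 + D)" "reach_tail g2" "D \<noteq> 0"
      using r1(2) r2(2) reach_tail_antimono[of g1 "g1 + D"] reach_tail_antimono[of g2 "g2 + D"]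
      unfolding g1_def g2_def by auto
    moreover have "d \<le> d * D"
      using mult_left_mono[of 1 D d] True \<open>D \<noteq> 0\<close> d_nonneg by simp
    then have "g1 + D \<le> g2"
      using gap bound d by (simp add: abs_le_iff)
    ultimately show False
      using reach_tail_antimono by blast
  next
    case False
    then have "reach_tail (g1 + D)" "\<not> reach_tail g2"
      using r1(2) r2(2) reach_tail_antimono[of "g1 + D" g1] reach_tail_antimono[of "g2 + D" g2]
      unfolding g1_def g2_def by auto
    moreover have "d * D \<le> - d"
      using mult_left_mono[of D "-1" d] False d_nonneg by simp
    then have "g2 \<le> g1 + D"
      using gap bound d by (simp add: abs_le_iff)
    ultimately show False
      using reach_tail_antimono by blast
  qed
qed

private lemma periodic_step_if_not_defective_period:
  assumes "s \<le> i" "\<not> defective_period ((i - s) div len)"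
  shows "frac_until A B x y i \<longleftrightarrow> frac_until A B x y (i + len)"
proof -
  define r where "r = (i - s) mod len"
  have "r < len"
    unfolding r_def using len_pos by simp
  then have "frac_until A B x y (s + (i - s) div len * len + r) \<longleftrightarrow>
      frac_until A B x y (s + (i - s) div len * len + r + len)"
    using assms(2) unfolding defective_period_def by blast
  moreover have i: "i = s + (i - s) div len * len + r"
    unfolding r_def using assms(1) by simp
  ultimately show ?thesis
    by (subst (1 2) i) assumption
qed

lemma frac_until_periodic_outside_block:
  assumes "x \<le> y" "0 < y" "len * y \<le> n"
  shows "\<exists>n1 n2. n = n1 + len * y + n2 \<and>
           (\<forall>i. (s \<le> i \<and> i < s + (n1 - 1) * len \<or>
                 s + (n1 + len * y) * len \<le> i \<and> i < s + (n1 + len * y + n2 - 2) * len) \<longrightarrow>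
                (frac_until A B x y i \<longleftrightarrow> frac_until A B x y (i + len)))"
proof -
  define c where "c = len * y"
  have c: "1 \<le> c" "c \<le> n"
    using len_pos assms(2,3) unfolding c_def by simp_all
  \<comment> \<open>the first defective period, or \<open>n\<close> if there is none\<close>
  define m where "m = (LEAST t. t = n \<or> t + 3 \<le> n \<and> defective_period t)"
  have below_m: "\<not> defective_period t" if "t < m" "t + 3 \<le> n" for t
    using not_less_Least[of t] that unfolding m_def by blast
  have m_defective: "defective_period m" "m + 3 \<le> n" if "m < n"
    using LeastI[of "\<lambda>t. t = n \<or> t + 3 \<le> n \<and> defective_period t" n] that unfolding m_def by auto
  define n1 where "n1 = min (m + 1) (n - c)"
  have n1: "n1 \<le> m + 1" "n1 \<le> n - c" "n1 = m + 1 \<or> n1 = n - c"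
    unfolding n1_def by auto
  show ?thesis
    unfolding c_def[symmetric]
  proof (intro exI conjI allI impI)
    show "n = n1 + c + (n - c - n1)"
      using n1(2) c(2) by simp
  next
    fix i
    assume "s \<le> i \<and> i < s + (n1 - 1) * len \<or>
        s + (n1 + c) * len \<le> i \<and> i < s + (n1 + c + (n - c - n1) - 2) * len"
    moreover have "n1 + c + (n - c - n1) - 2 = n - 2"
      using n1(2) c(2) by simp
    ultimately consider (before) "s \<le> i" "(i - s) div len < n1 - 1"
      | (after) "s \<le> i" "n1 + c \<le> (i - s) div len" "(i - s) div len < n - 2"
      using len_pos by (auto simp: div_less_iff_less_mult less_eq_div_iff_mult_less_eq)
    then show "frac_until A B x y i \<longleftrightarrow> frac_until A B x y (i + len)"
    proof cases
      case before
      then have "(i - s) div len < m" "(i - s) div len + 3 \<le> n"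
        using n1 c by linarith+
      then have "\<not> defective_period ((i - s) div len)"
        using below_m by blast
      then show ?thesis
        using periodic_step_if_not_defective_period before(1) by blast
    next
      case after
      have "\<not> defective_period ((i - s) div len)"
      proof
        assume defective: "defective_period ((i - s) div len)"
        have "n1 = m + 1"
          using after(2,3) n1(3) by linarith
        then have "m < n"
          using after(2,3) by linarith
        then show False
          using defective_periods_close[OF assms(1) m_defective(1) defective]
            m_defective(2) after(2,3) \<open>n1 = m + 1\<close> unfolding c_def by linarith
      qed
      then show ?thesis
        using periodic_step_if_not_defective_period after(1) by blast
    qed
  qed
qed

end

section \<open>Locations of an augmented path schema\<close>

lemma comp_start_Suc: "k < length Ps \<Longrightarrow> comp_start Ps (Suc k) = comp_start Ps k + length (Ps ! k)"
  by (simp add: comp_start_def take_Suc_conv_app_nth)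

lemma comp_start_length: "comp_start Ps (length Ps) = aps_len Ps"
  by (simp add: comp_start_def aps_len_def)

lemma comp_start_mono: "k \<le> k' \<Longrightarrow> comp_start Ps k \<le> comp_start Ps k'"
  unfolding comp_start_def by (metis le_Suc_ex take_add concat_append length_append le_add1)

lemma aps_at_comp_start:
  assumes "k < length Ps" "j < length (Ps ! k)"
  shows "aps_at Ps (comp_start Ps k + j) = Ps ! k ! j"
proof -
  have "concat Ps = concat (take k Ps) @ Ps ! k @ concat (drop (Suc k) Ps)"
    using id_take_nth_drop[OF assms(1)] by (metis concat.simps(2) concat_append)
  then show ?thesis
    unfolding aps_at_def comp_start_def using assms(2) by (simp add: nth_append)
qed

lemma loc_less_aps_len: "k < length Ps \<Longrightarrow> l \<in> loc Ps k \<Longrightarrow> l < aps_len Ps"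
  using comp_start_mono[of "Suc k" "length Ps" Ps] comp_start_Suc[of k Ps] comp_start_length[of Ps]
  unfolding loc_def by simp

lemma loc_exists: "l < aps_len Ps \<Longrightarrow> \<exists>k<length Ps. l \<in> loc Ps k"
proof -
  have "\<exists>k<j. l \<in> loc Ps k" if "j \<le> length Ps" "l < comp_start Ps j" for j
    using that
  proof (induction j)
    case (Suc j)
    show ?case
    proof (cases "l < comp_start Ps j")
      case True
      then show ?thesis
        using Suc by (meson Suc_leD less_SucI)
    next
      case False
      then have "l \<in> loc Ps j"
        using Suc.prems comp_start_Suc[of j Ps] unfolding loc_def by simp
      then show ?thesis
        by blast
    qed
  qed (simp add: comp_start_def)
  then show "l < aps_len Ps \<Longrightarrow> \<exists>k<length Ps. l \<in> loc Ps k"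
    using comp_start_length[of Ps] by simp
qed

lemma loc_unique:
  assumes "k1 < length Ps" "k2 < length Ps" "l \<in> loc Ps k1" "l \<in> loc Ps k2"
  shows "k1 = k2"
proof -
  have disjoint: "l \<notin> loc Ps kb" if "ka < kb" "l \<in> loc Ps ka" "ka < length Ps" for ka kb
    using comp_start_mono[of "Suc ka" kb Ps] comp_start_Suc[of ka Ps] that unfolding loc_def by simp
  show ?thesis
    using disjoint[of k1 k2] disjoint[of k2 k1] assms by (cases k1 k2 rule: linorder_cases) auto
qed

definition comp_of :: "('s, 'ap, 'c) apath list \<Rightarrow> nat \<Rightarrow> nat" where
  "comp_of Ps l = (THE k. k < length Ps \<and> l \<in> loc Ps k)"

definition offset :: "('s, 'ap, 'c) apath list \<Rightarrow> nat \<Rightarrow> nat" where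
  "offset Ps l = l - comp_start Ps (comp_of Ps l)"

lemma comp_of_eq: "k < length Ps \<Longrightarrow> l \<in> loc Ps k \<Longrightarrow> comp_of Ps l = k"
  unfolding comp_of_def by (rule the_equality) (auto dest: loc_unique)

lemma comp_of_offset:
  assumes "l < aps_len Ps"
  shows "comp_of Ps l < length Ps" "l \<in> loc Ps (comp_of Ps l)"
    "offset Ps l < length (Ps ! comp_of Ps l)" "l = comp_start Ps (comp_of Ps l) + offset Ps l"
proof -
  obtain k where k: "k < length Ps" "l \<in> loc Ps k"
    using loc_exists[OF assms] by blast
  moreover have "comp_of Ps l = k"
    using comp_of_eq[OF k] .
  ultimately show "comp_of Ps l < length Ps" "l \<in> loc Ps (comp_of Ps l)"
    "offset Ps l < length (Ps ! comp_of Ps l)" "l = comp_start Ps (comp_of Ps l) + offset Ps l"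
    unfolding offset_def loc_def by auto
qed

lemma comp_of_offset_comp_start:
  assumes "k < length Ps" "j < length (Ps ! k)"
  shows "comp_of Ps (comp_start Ps k + j) = k" "offset Ps (comp_start Ps k + j) = j"
proof -
  show "comp_of Ps (comp_start Ps k + j) = k"
    using assms by (intro comp_of_eq) (auto simp: loc_def)
  then show "offset Ps (comp_start Ps k + j) = j"
    unfolding offset_def by simp
qed

lemma aps_at_comp_of: "l < aps_len Ps \<Longrightarrow> aps_at Ps l = Ps ! comp_of Ps l ! offset Ps l"
  using aps_at_comp_start comp_of_offset by metis

lemma interval_eq_atLeastLessThan:
  fixes a b c d :: nat
  assumes "{a..b} = {c..<d}" "a \<le> b"
  shows "a = c" "b = d - 1"
proof -
  have "a \<in> {c..<d}" "b \<in> {c..<d}"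
    using assms by (auto simp flip: assms(1))
  moreover have "c \<in> {a..b}" "d - 1 \<in> {a..b}"
    using calculation unfolding assms(1) by auto
  ultimately show "a = c" "b = d - 1"
    by auto
qed

lemma cs_trans_cases:
  assumes nonempty: "\<forall>P\<in>set Ps. P \<noteq> []" and trans: "cs_trans E Ps l l'" and l: "l < aps_len Ps"
  shows "l' < aps_len Ps \<and>
    (comp_of Ps l' = comp_of Ps l \<and>
       offset Ps l' = Suc (offset Ps l) mod length (Ps ! comp_of Ps l) \<or>
     comp_of Ps l' = Suc (comp_of Ps l) \<and>
       offset Ps l' = 0 \<and> Suc (offset Ps l) = length (Ps ! comp_of Ps l))"
proof -
  define k where "k = comp_of Ps l"
  define j where "j = offset Ps l"
  have k: "k < length Ps" "j < length (Ps ! k)" "l = comp_start Ps k + j"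
    using comp_of_offset[OF l] unfolding k_def j_def by auto
  from trans consider (step_forward) "l' = Suc l" "l' < aps_len Ps"
    | (loop_back) k' where "l' < l" "k' < length Ps" "{l'..l} = loc Ps k'"
    unfolding cs_trans_def by blast
  then show ?thesis
  proof cases
    case step_forward
    show ?thesis
    proof (cases "Suc j < length (Ps ! k)")
      case True
      then show ?thesis
        using comp_of_offset_comp_start[OF k(1) True] step_forward k(3)
        unfolding k_def[symmetric] j_def[symmetric] by simp
    next
      case False
      then have last: "Suc j = length (Ps ! k)"
        using k by simp
      then have l': "l' = comp_start Ps (Suc k)"
        using step_forward k comp_start_Suc[OF k(1)] by simp
      have "Suc k < length Ps"
        using l' step_forward(2) comp_start_length[of Ps] k(1)
        by (metis Suc_lessI less_irrefl)
      moreover have "0 < length (Ps ! Suc k)"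
        using nonempty calculation by auto
      ultimately show ?thesis
        using comp_of_offset_comp_start[of "Suc k" Ps 0] l' step_forward last
        unfolding k_def[symmetric] j_def[symmetric] by simp
    qed
  next
    case loop_back
    have "l \<in> loc Ps k'"
      using loop_back by (auto simp flip: loop_back(3))
    then have "k' = k"
      using comp_of_eq[OF loop_back(2)] unfolding k_def by simp
    then have "l' = comp_start Ps k + 0" "Suc j = length (Ps ! k)"
      using interval_eq_atLeastLessThan[OF loop_back(3)[unfolded loc_def]] loop_back(1) k by auto
    moreover have "Ps ! k \<noteq> []"
      using k(2) by auto
    ultimately show ?thesis
      using comp_of_offset_comp_start[OF k(1), of 0] loop_back(1) l
      unfolding k_def[symmetric] j_def[symmetric] by simp
  qed
qed

lemma periodic_comps_member:
  assumes "periodic Lset (comps Ps a b)" "a \<le> c" "c \<le> b" "b < length Ps"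
  shows "length (Ps ! c) = length (Ps ! a)"
    "\<forall>j<length (Ps ! a). lab (Ps ! c ! j) \<inter> Lset = lab (Ps ! a ! j) \<inter> Lset"
proof -
  have mem: "Ps ! d \<in> set (comps Ps a b)" if "a \<le> d" "d \<le> b" for d
  proof -
    have "comps Ps a b ! (d - a) = Ps ! d" "d - a < length (comps Ps a b)"
      unfolding comps_def using that assms(4) by auto
    then show ?thesis
      by (metis nth_mem)
  qed
  have "Ps ! c \<in> set (comps Ps a b)" "Ps ! a \<in> set (comps Ps a b)"
    using mem assms(2,3) by simp_all
  then have "length (Ps ! c) = length (Ps ! a) \<and>
      (\<forall>j<length (Ps ! c). lab (Ps ! c ! j) \<inter> Lset = lab (Ps ! a ! j) \<inter> Lset)"
    using assms(1) unfolding periodic_def by blast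
  then show "length (Ps ! c) = length (Ps ! a)"
    "\<forall>j<length (Ps ! a). lab (Ps ! c ! j) \<inter> Lset = lab (Ps ! a ! j) \<inter> Lset"
    by simp_all
qed

section \<open>Runs of an augmented path schema\<close>

locale aps_run =
  fixes E :: "('s \<times> 's) set" and Ps :: "('s, 'ap, 'c) apath list" and \<sigma> :: "nat \<Rightarrow> nat"
  assumes components_nonempty: "\<forall>P\<in>set Ps. P \<noteq> []" and Ps_nonempty: "Ps \<noteq> []"
    and run: "\<sigma> \<in> Runs E Ps"
begin

abbreviation comp_at :: "nat \<Rightarrow> nat" where
  "comp_at t \<equiv> comp_of Ps (\<sigma> t)"

abbreviation ofs_at :: "nat \<Rightarrow> nat" where
  "ofs_at t \<equiv> offset Ps (\<sigma> t)"

abbreviation labelled :: "'ap fltl \<Rightarrow> nat \<Rightarrow> bool" where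
  "labelled f t \<equiv> f \<in> lab (aps_at Ps (\<sigma> t))"

lemma run_trans: "cs_trans E Ps (\<sigma> t) (\<sigma> (Suc t))"
  using run unfolding Runs_def cs_run_def by auto

lemma run_less_aps_len: "\<sigma> t < aps_len Ps"
proof (induction t)
  case 0
  have "0 < length (Ps ! 0)"
    using components_nonempty Ps_nonempty by auto
  then have "0 < aps_len Ps"
    using loc_less_aps_len[of 0 Ps 0] Ps_nonempty unfolding loc_def comp_start_def by simp
  then show ?case
    using run unfolding Runs_def cs_run_def by simp
next
  case (Suc t)
  then show ?case
    using cs_trans_cases[OF components_nonempty run_trans] by blast
qed

lemma run_visits: "l < aps_len Ps \<Longrightarrow> \<exists>t. \<sigma> t = l"
  using run unfolding Runs_def by auto

lemma run_visits_position:
  assumes "k < length Ps" "j < length (Ps ! k)"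
  obtains t where "\<sigma> t = comp_start Ps k + j" "comp_at t = k" "ofs_at t = j"
proof -
  have "comp_start Ps k + j < aps_len Ps"
    using loc_less_aps_len[OF assms(1)] assms(2) unfolding loc_def by simp
  then obtain t where "\<sigma> t = comp_start Ps k + j"
    using run_visits by blast
  then show ?thesis
    using that comp_of_offset_comp_start[OF assms] by simp
qed

lemma run_position:
  "comp_at t < length Ps" "ofs_at t < length (Ps ! comp_at t)"
  "\<sigma> t = comp_start Ps (comp_at t) + ofs_at t" "aps_at Ps (\<sigma> t) = Ps ! comp_at t ! ofs_at t"
  by (rule comp_of_offset[OF run_less_aps_len] aps_at_comp_of[OF run_less_aps_len])+

lemma run_step:
  "comp_at (Suc t) = comp_at t \<and> ofs_at (Suc t) = Suc (ofs_at t) mod length (Ps ! comp_at t) \<or>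
   comp_at (Suc t) = Suc (comp_at t) \<and> ofs_at (Suc t) = 0 \<and>
     Suc (ofs_at t) = length (Ps ! comp_at t)"
  using cs_trans_cases[OF components_nonempty run_trans run_less_aps_len] by blast

lemma comp_at_mono: "t \<le> t' \<Longrightarrow> comp_at t \<le> comp_at t'"
proof (induction t' rule: dec_induct)
  case (step t')
  then show ?case
    using run_step[of t'] by auto
qed simp

lemma ofs_at_Suc: "ofs_at (Suc t) = Suc (ofs_at t) mod length (Ps ! comp_at t)"
  using run_step[of t] by auto

lemma ofs_at_uniform:
  assumes "t0 \<le> t" "ofs_at t0 < m"
    and lengths: "\<And>t'. t0 \<le> t' \<Longrightarrow> t' < t \<Longrightarrow> length (Ps ! comp_at t') = m"
  shows "ofs_at t = (ofs_at t0 + (t - t0)) mod m"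
  using assms(1) lengths
proof (induction t rule: dec_induct)
  case (step t)
  then have "ofs_at (Suc t) = Suc ((ofs_at t0 + (t - t0)) mod m) mod m"
    using ofs_at_Suc[of t] by simp
  then show ?case
    using step(1) by (simp add: mod_Suc_eq Suc_diff_le)
qed (use assms(2) in simp)

lemma run_stays_in_comp:
  "ofs_at t + d < length (Ps ! comp_at t) \<Longrightarrow>
     comp_at (t + d) = comp_at t \<and> ofs_at (t + d) = ofs_at t + d"
proof (induction d)
  case (Suc d)
  then have "comp_at (t + d) = comp_at t \<and> ofs_at (t + d) = ofs_at t + d"
    by simp
  moreover have "Suc (ofs_at (t + d)) < length (Ps ! comp_at (t + d))"
    using Suc.prems calculation by simp
  ultimately show ?case
    using run_step[of "t + d"] by auto
qed simp

lemma comp_at_after_period: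
  assumes L1: "length (Ps ! comp_at i) = m"
    and L2: "Suc (comp_at i) < length Ps \<Longrightarrow> length (Ps ! Suc (comp_at i)) = m"
  shows "comp_at (i + m) \<le> Suc (comp_at i)"
proof -
  define j where "j = ofs_at i"
  have j: "j < m"
    using run_position(2)[of i] L1 unfolding j_def by simp
  define t1 where "t1 = i + (m - 1 - j)"
  have t1: "comp_at t1 = comp_at i" "ofs_at t1 = m - 1"
    using run_stays_in_comp[of i "m - 1 - j"] j L1 unfolding t1_def j_def by simp_all
  then have next_comp: "comp_at (Suc t1) = comp_at i \<or> comp_at (Suc t1) = Suc (comp_at i)"
    "ofs_at (Suc t1) = 0"
    using run_step[of t1] L1 j by auto
  then have "length (Ps ! comp_at (Suc t1)) = m"
    using L1 L2 run_position(1)[of "Suc t1"] by auto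
  then have "comp_at (Suc t1 + j) = comp_at (Suc t1)"
    using run_stays_in_comp[of "Suc t1" j] next_comp j by simp
  moreover have "Suc t1 + j = i + m"
    unfolding t1_def using j by simp
  ultimately show ?thesis
    using next_comp by auto
qed

lemma row_visited_once:
  assumes row: "atype (aps_at Ps l) = R" and i: "\<sigma> i = l"
  shows "t < i \<Longrightarrow> \<sigma> t < l" and "i < t \<Longrightarrow> l < \<sigma> t"
proof -
  have not_in_loop: "l \<notin> loc Ps k" if "k < length Ps" "is_loop E (Ps ! k)" for k
  proof
    assume "l \<in> loc Ps k"
    then have "aps_at Ps l \<in> set (Ps ! k)"
      using aps_at_comp_start[OF that(1), of "l - comp_start Ps k"] unfolding loc_def by auto
    then show False
      using row that(2) unfolding is_loop_def by auto
  qed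
  have next_above: "l < \<sigma> (Suc t)" if le: "l \<le> \<sigma> t" for t
  proof (rule ccontr)
    assume "\<not> l < \<sigma> (Suc t)"
    then obtain k where k: "k < length Ps" "is_loop E (Ps ! k)" "{\<sigma> (Suc t)..\<sigma> t} = loc Ps k"
      using run_trans[of t] le unfolding cs_trans_def by auto
    have "l \<in> {\<sigma> (Suc t)..\<sigma> t}"
      using \<open>\<not> l < \<sigma> (Suc t)\<close> le by simp
    then show False
      using not_in_loop[OF k(1,2)] k(3) by simp
  qed
  have stays_above: "l < \<sigma> t'" if "l \<le> \<sigma> t" "t < t'" for t t'
    using Suc_leI[OF that(2)]
  proof (induction t' rule: dec_induct)
    case base
    then show ?case
      using next_above that(1) by blast
  next
    case (step t')
    then show ?case
      using next_above less_imp_le by blast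
  qed
  show "t < i \<Longrightarrow> \<sigma> t < l" "i < t \<Longrightarrow> l < \<sigma> t"
    using stays_above[of t i] stays_above[of i t] i by fastforce+
qed

lemma run_counter:
  obtains \<theta> :: "nat \<Rightarrow> 'c \<Rightarrow> int"
  where "\<And>t c. \<theta> t c = (\<Sum>t'<t. upd (aps_at Ps (\<sigma> t')) c)"
    and "\<And>t g. g \<in> grd (aps_at Ps (\<sigma> (Suc t))) \<Longrightarrow> guard_holds (\<theta> (Suc t)) g"
proof -
  obtain \<theta> :: "nat \<Rightarrow> 'c \<Rightarrow> int" where \<theta>: "\<theta> 0 = (\<lambda>c. 0)"
    "\<And>i. \<theta> (Suc i) = (\<lambda>c. \<theta> i c + upd (aps_at Ps (\<sigma> i)) c)"
    "\<And>i. \<forall>g\<in>grd (aps_at Ps (\<sigma> (Suc i))). guard_holds (\<theta> (Suc i)) g"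
    using run unfolding Runs_def cs_run_def by blast
  have "\<theta> t c = (\<Sum>t'<t. upd (aps_at Ps (\<sigma> t')) c)" for t c
    by (induction t) (simp_all add: \<theta>(1,2))
  then show ?thesis
    using that \<theta>(3) by blast
qed

lemma labels_in_periodic_comps:
  assumes "periodic Lset (comps Ps k1 k2)" "k2 < length Ps" "k1 \<le> comp_at t" "comp_at t \<le> k2"
  shows "length (Ps ! comp_at t) = length (Ps ! k1)"
    "lab (aps_at Ps (\<sigma> t)) \<inter> Lset = lab (Ps ! k1 ! ofs_at t) \<inter> Lset"
  using periodic_comps_member[OF assms(1,3,4,2)] run_position(2,4)[of t] by auto

lemma labels_by_offset:
  assumes per: "periodic Lset (comps Ps k1 k2)" and k2: "k2 < length Ps" "k1 \<le> k2"
    and region: "\<And>t'. e \<le> t' \<Longrightarrow> t' \<le> t \<Longrightarrow> k1 \<le> comp_at t' \<and> comp_at t' \<le> k2"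
    and "e \<le> t"
  shows "ofs_at t = (ofs_at e + (t - e)) mod length (Ps ! k1)"
    and "f \<in> Lset \<Longrightarrow> labelled f t \<longleftrightarrow> f \<in> lab (Ps ! k1 ! ((ofs_at e + (t - e)) mod length (Ps ! k1)))"
proof -
  have lengths: "length (Ps ! comp_at t') = length (Ps ! k1)" if "e \<le> t'" "t' \<le> t" for t'
    using labels_in_periodic_comps(1)[OF per k2(1)] region[OF that] by simp
  have "ofs_at e < length (Ps ! k1)"
    using lengths[of e] run_position(2)[of e] \<open>e \<le> t\<close> by simp
  then show ofs: "ofs_at t = (ofs_at e + (t - e)) mod length (Ps ! k1)"
    using lengths \<open>e \<le> t\<close> by (intro ofs_at_uniform) auto
  have "lab (aps_at Ps (\<sigma> t)) \<inter> Lset =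
      lab (Ps ! k1 ! ((ofs_at e + (t - e)) mod length (Ps ! k1))) \<inter> Lset"
    using labels_in_periodic_comps(2)[OF per k2(1)] region[OF \<open>e \<le> t\<close> order_refl] ofs by simp
  then show "labelled f t \<longleftrightarrow> f \<in> lab (Ps ! k1 ! ((ofs_at e + (t - e)) mod length (Ps ! k1)))"
    if "f \<in> Lset"
    using that by blast
qed

lemma labels_in_periodic_region:
  assumes per: "periodic Lset (comps Ps k1 k2)" and k2: "k2 < length Ps" "k1 \<le> k2"
    and e: "e1 \<le> e2"
    and region: "\<And>t. e1 \<le> t \<Longrightarrow> t < e2 + length (Ps ! k1) \<Longrightarrow> k1 \<le> comp_at t \<and> comp_at t \<le> k2"
    and ofs: "ofs_at e1 = ofs_at e2"
  obtains q where "e2 = e1 + q * length (Ps ! k1)"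
    "\<And>d f. d < (q + 1) * length (Ps ! k1) \<Longrightarrow> f \<in> Lset \<Longrightarrow>
       labelled f (e1 + d) \<longleftrightarrow> f \<in> lab (Ps ! k1 ! ((ofs_at e1 + d) mod length (Ps ! k1)))"
proof -
  define m where "m = length (Ps ! k1)"
  have m: "0 < m"
    using components_nonempty k2 unfolding m_def by auto
  have by_offset: "ofs_at t = (ofs_at e1 + (t - e1)) mod m"
    "f \<in> Lset \<Longrightarrow> labelled f t \<longleftrightarrow> f \<in> lab (Ps ! k1 ! ((ofs_at e1 + (t - e1)) mod m))"
    if "e1 \<le> t" "t < e2 + m" for t f
    using labels_by_offset[OF per k2, of e1 t] region that unfolding m_def by auto
  have "(ofs_at e1 + (e2 - e1)) mod m = ofs_at e1 mod m"
    using by_offset(1)[of e2] by_offset(1)[of e1] e m ofs by simp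
  then have "m dvd (e2 - e1)"
    using mod_eq_dvd_iff_nat[of "ofs_at e1" "ofs_at e1 + (e2 - e1)" m] by simp
  then obtain q where q: "e2 = e1 + q * m"
    using e by (metis dvd_def mult.commute le_add_diff_inverse)
  moreover have "labelled f (e1 + d) \<longleftrightarrow> f \<in> lab (Ps ! k1 ! ((ofs_at e1 + d) mod m))"
    if "d < (q + 1) * m" "f \<in> Lset" for d f
    using by_offset(2)[of "e1 + d" f] that q by simp
  ultimately show ?thesis
    using that unfolding m_def by blast
qed

lemma periodic_transfer:
  assumes per: "periodic {\<alpha>, \<beta>, F} (comps Ps k1 k2)" and k2: "k2 < length Ps" "k1 \<le> k2"
    and e: "e1 \<le> e2"
    and region: "\<And>t. e1 \<le> t \<Longrightarrow> t < e2 + length (Ps ! k1) \<Longrightarrow> k1 \<le> comp_at t \<and> comp_at t \<le> k2"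
    and ofs: "ofs_at e1 = ofs_at e2" and k: "k1 \<le> k" "k \<le> k2"
  shows "labelled F e1 \<longleftrightarrow> labelled F e2"
    and "good x y \<alpha> (Ps ! k) \<or> neutral x y \<alpha> (Ps ! k) \<Longrightarrow>
       frac_until (labelled \<alpha>) (labelled \<beta>) x y e2 \<Longrightarrow> frac_until (labelled \<alpha>) (labelled \<beta>) x y e1"
    and "bad x y \<alpha> (Ps ! k) \<Longrightarrow>
       frac_until (labelled \<alpha>) (labelled \<beta>) x y e1 \<Longrightarrow> frac_until (labelled \<alpha>) (labelled \<beta>) x y e2"
proof -
  define m where "m = length (Ps ! k1)"
  define c where "c = ofs_at e1"
  obtain q where q: "e2 = e1 + q * m"
    and pattern: "\<And>d f. d < (q + 1) * m \<Longrightarrow> f \<in> {\<alpha>, \<beta>, F} \<Longrightarrow>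
      labelled f (e1 + d) \<longleftrightarrow> f \<in> lab (Ps ! k1 ! ((c + d) mod m))"
    using labels_in_periodic_region[OF per k2 e region ofs] unfolding m_def c_def by blast
  have m: "0 < m"
    using components_nonempty k2 unfolding m_def by auto
  show "labelled F e1 \<longleftrightarrow> labelled F e2"
    using pattern[of 0 F] pattern[of "q * m" F] m unfolding q by simp
  have shift: "shift_periodic m e1 (e1 + q * m) (labelled f)" if "f \<in> {\<alpha>, \<beta>, F}" for f
    unfolding shift_periodic_def
  proof (intro allI impI)
    fix t assume "e1 \<le> t" "t < e1 + q * m"
    then obtain d where t: "t = e1 + d" "d < q * m"
      by (metis add_less_cancel_left le_Suc_ex)
    have "(c + (d + m)) mod m = (c + d) mod m"
      by (simp add: add.assoc[symmetric])
    then show "labelled f (t + m) = labelled f t"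
      using pattern[of d f] pattern[of "d + m" f] that t by (simp add: add.assoc)
  qed
  have "gain (labelled \<alpha>) x y (e1 + m) - gain (labelled \<alpha>) x y e1 =
      (\<Sum>j<m. weight x y (\<alpha> \<in> lab (Ps ! k1 ! j)))"
    using pattern m by (intro gain_rotated_period) auto
  also have "\<dots> = (\<Sum>j<length (Ps ! k). weight x y (\<alpha> \<in> lab (Ps ! k ! j)))"
  proof (rule sum.cong)
    show "{..<m} = {..<length (Ps ! k)}"
      using periodic_comps_member(1)[OF per k k2(1)] unfolding m_def by simp
  next
    fix j assume "j \<in> {..<length (Ps ! k)}"
    then have "lab (Ps ! k ! j) \<inter> {\<alpha>, \<beta>, F} = lab (Ps ! k1 ! j) \<inter> {\<alpha>, \<beta>, F}"
      using periodic_comps_member[OF per k k2(1)] by simp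
    then have "\<alpha> \<in> lab (Ps ! k1 ! j) \<longleftrightarrow> \<alpha> \<in> lab (Ps ! k ! j)"
      by blast
    then show "weight x y (\<alpha> \<in> lab (Ps ! k1 ! j)) = weight x y (\<alpha> \<in> lab (Ps ! k ! j))"
      by simp
  qed
  also have "\<dots> = int y * int (count_lab \<alpha> (Ps ! k)) - int x * int (length (Ps ! k))"
    by (rule sum_weight_count_lab)
  finally have D: "gain (labelled \<alpha>) x y (e1 + m) - gain (labelled \<alpha>) x y e1 =
      int y * int (count_lab \<alpha> (Ps ! k)) - int x * int (length (Ps ! k))" .
  show "frac_until (labelled \<alpha>) (labelled \<beta>) x y e1"
    if "good x y \<alpha> (Ps ! k) \<or> neutral x y \<alpha> (Ps ! k)" "frac_until (labelled \<alpha>) (labelled \<beta>) x y e2"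
  proof (rule frac_until_from_later_period[OF shift])
    show "0 \<le> gain (labelled \<alpha>) x y (e1 + m) - gain (labelled \<alpha>) x y e1"
      using that(1) unfolding D good_def neutral_def by (auto simp flip: of_nat_mult)
  qed (use that(2) q in simp_all)
  show "frac_until (labelled \<alpha>) (labelled \<beta>) x y e2"
    if "bad x y \<alpha> (Ps ! k)" "frac_until (labelled \<alpha>) (labelled \<beta>) x y e1"
    unfolding q
  proof (rule frac_until_to_later_period[OF shift shift m _ that(2)])
    show "gain (labelled \<alpha>) x y (e1 + m) - gain (labelled \<alpha>) x y e1 \<le> 0"
      using that(1) unfolding D bad_def by (simp flip: of_nat_mult)
  qed simp_all
qed

section \<open>Soundness of consistent labels\<close>

lemma frac_until_good_last_comp:
  assumes good: "good x y \<alpha> (last Ps)" and has_\<beta>: "\<exists>a\<in>set (last Ps). \<beta> \<in> lab a"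
  shows "frac_until (labelled \<alpha>) (labelled \<beta>) x y i"
proof -
  define k where "k = length Ps - 1"
  define m where "m = length (Ps ! k)"
  have k: "k < length Ps" "last Ps = Ps ! k"
    unfolding k_def using Ps_nonempty by (auto simp: last_conv_nth)
  have m: "0 < m"
    using components_nonempty k(1) unfolding m_def by auto
  obtain jb where jb: "jb < m" "\<beta> \<in> lab (Ps ! k ! jb)"
    using has_\<beta> k(2) unfolding m_def by (metis in_set_conv_nth)
  obtain e0 where e0: "comp_at e0 = k" "ofs_at e0 = 0"
    using run_visits_position[OF k(1), of 0] m unfolding m_def by metis
  have comp_t: "comp_at t = k" if "e0 \<le> t" for t
    using comp_at_mono[OF that] e0 run_position(1)[of t] unfolding k_def by simp
  have labels: "labelled f t \<longleftrightarrow> f \<in> lab (Ps ! k ! ((t - e0) mod m))" if "e0 \<le> t" for f t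
  proof -
    have "ofs_at t = (t - e0) mod m"
      using ofs_at_uniform[OF that, of m] e0 comp_t m unfolding m_def by simp
    then show ?thesis
      using run_position(4)[of t] comp_t[OF that] by simp
  qed
  define t0 where "t0 = e0 + i * m"
  have "i \<le> i * m"
    using m by simp
  then have t0_i: "i \<le> t0"
    unfolding t0_def by linarith
  have t0_mod: "(t0 + d - e0) mod m = d mod m" for d
    unfolding t0_def by (simp add: add.commute)
  have shift: "shift_periodic m t0 e (labelled \<alpha>)" for e
    unfolding shift_periodic_def
  proof (intro allI impI)
    fix t assume "t0 \<le> t"
    then have "e0 \<le> t"
      unfolding t0_def by simp
    then have "(t + m - e0) mod m = (t - e0) mod m"
      by (metis Nat.add_diff_assoc2 mod_add_self2)
    then show "labelled \<alpha> (t + m) = labelled \<alpha> t"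
      using labels[of t] labels[of "t + m"] \<open>e0 \<le> t\<close> by simp
  qed
  have "gain (labelled \<alpha>) x y (t0 + m) - gain (labelled \<alpha>) x y t0 =
      (\<Sum>j<m. weight x y (\<alpha> \<in> lab (Ps ! k ! j)))"
    using labels[of "t0 + _" \<alpha>] t0_mod m unfolding t0_def
    by (intro gain_rotated_period[where c = 0]) auto
  also have "\<dots> = int y * int (count_lab \<alpha> (Ps ! k)) - int x * int m"
    unfolding m_def by (rule sum_weight_count_lab)
  also have "\<dots> \<ge> 1"
    using good k(2) unfolding good_def m_def by (simp flip: of_nat_mult)
  finally have D: "1 \<le> gain (labelled \<alpha>) x y (t0 + m) - gain (labelled \<alpha>) x y t0" .
  \<comment> \<open>\<open>Q\<close> periods of gain at least 1 outweigh the loss of at most \<open>x\<close> per step before \<open>t0\<close>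
    and after \<open>t0 + Q * m\<close>\<close>
  define Q where "Q = x * (t0 - i) + x * jb"
  define p where "p = t0 + Q * m + jb"
  have "gain (labelled \<alpha>) x y (t0 + Q * m) - gain (labelled \<alpha>) x y t0 =
      int Q * (gain (labelled \<alpha>) x y (t0 + m) - gain (labelled \<alpha>) x y t0)"
    by (rule gain_shift_multiple[OF shift[of "t0 + Q * m"]]) simp_all
  also have "\<dots> \<ge> int Q * 1"
    using D by (intro mult_left_mono) auto
  finally have "int Q \<le> gain (labelled \<alpha>) x y (t0 + Q * m) - gain (labelled \<alpha>) x y t0"
    by simp
  moreover have "- (int x * int (t0 - i)) \<le> gain (labelled \<alpha>) x y t0 - gain (labelled \<alpha>) x y i"
    by (rule gain_lower[OF t0_i])
  moreover have "- (int x * int jb) \<le> gain (labelled \<alpha>) x y p - gain (labelled \<alpha>) x y (t0 + Q * m)"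
    using gain_lower[of "t0 + Q * m" p] unfolding p_def by simp
  ultimately have "gain (labelled \<alpha>) x y i \<le> gain (labelled \<alpha>) x y p"
    unfolding Q_def by simp
  moreover have "labelled \<beta> p"
    using labels[of p \<beta>] t0_mod[of "Q * m + jb"] jb unfolding p_def t0_def by (simp add: add.assoc)
  moreover have "i \<le> p"
    using t0_i unfolding p_def by simp
  ultimately show ?thesis
    unfolding frac_until_def by blast
qed

lemma labelled_iff_frac_until_counter:
  assumes row: "atype (aps_at Ps l) = R" and i: "\<sigma> i = l"
    and before: "\<forall>l'<l. upd (aps_at Ps l') c = 0"
    and from_l: "\<forall>l'. l \<le> l' \<and> l' < aps_len Ps \<longrightarrow>
       upd (aps_at Ps l') c = weight x y (\<alpha> \<in> lab (aps_at Ps l'))"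
    and unlabelled: "F \<notin> lab (aps_at Ps l) \<Longrightarrow> \<beta> \<notin> lab (aps_at Ps l) \<and>
       (\<forall>l'. l < l' \<and> l' < aps_len Ps \<and> \<beta> \<in> lab (aps_at Ps l') \<longrightarrow> Neg c \<in> grd (aps_at Ps l'))"
    and labelled: "F \<in> lab (aps_at Ps l) \<Longrightarrow>
       \<exists>l'. l < l' \<and> l' < aps_len Ps \<and> \<beta> \<in> lab (aps_at Ps l') \<and> NonNeg c \<in> grd (aps_at Ps l')"
  shows "labelled F i \<longleftrightarrow> frac_until (labelled \<alpha>) (labelled \<beta>) x y i"
proof -
  obtain \<theta> :: "nat \<Rightarrow> 'c \<Rightarrow> int" where \<theta>: "\<And>t c. \<theta> t c = (\<Sum>t'<t. upd (aps_at Ps (\<sigma> t')) c)"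
    and guards: "\<And>t g. g \<in> grd (aps_at Ps (\<sigma> (Suc t))) \<Longrightarrow> guard_holds (\<theta> (Suc t)) g"
    using run_counter by blast
  \<comment> \<open>the row location \<open>l\<close> is visited only at time \<open>i\<close>, so counter \<open>c\<close> starts there\<close>
  note visits = row_visited_once[OF row i]
  have counter: "\<theta> p c = gain (labelled \<alpha>) x y p - gain (labelled \<alpha>) x y i" if "i \<le> p" for p
    using that
  proof (induction p rule: dec_induct)
    case base
    have "(\<Sum>t'<i. upd (aps_at Ps (\<sigma> t')) c) = 0"
      using visits(1) before by (intro sum.neutral) auto
    then show ?case
      using \<theta> by simp
  next
    case (step p)
    have "l \<le> \<sigma> p"
      using visits(2)[of p] step(1) i by (cases "p = i") auto
    then have "upd (aps_at Ps (\<sigma> p)) c = weight x y (labelled \<alpha> p)"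
      using from_l run_less_aps_len[of p] by simp
    then show ?case
      using step \<theta> by simp
  qed
  have guard_at: "guard_holds (\<theta> p) g" if "i < p" "g \<in> grd (aps_at Ps (\<sigma> p))" for p g
    using guards[where t = "p - 1" and g = g] that by simp
  show ?thesis
  proof (cases "F \<in> lab (aps_at Ps l)")
    case False
    have "\<not> frac_until (labelled \<alpha>) (labelled \<beta>) x y i"
    proof
      assume "frac_until (labelled \<alpha>) (labelled \<beta>) x y i"
      then obtain p where p: "i \<le> p" "labelled \<beta> p"
        "gain (labelled \<alpha>) x y i \<le> gain (labelled \<alpha>) x y p"
        unfolding frac_until_def by blast
      have "p \<noteq> i"
        using p(2) unlabelled[OF False] i by auto
      then have "i < p"
        using p(1) by simp
      then have "Neg c \<in> grd (aps_at Ps (\<sigma> p))"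
        using unlabelled[OF False] visits(2) run_less_aps_len[of p] p(2) by auto
      then have "\<theta> p c < 0"
        using guard_at[OF \<open>i < p\<close>] by fastforce
      then show False
        using counter[OF p(1)] p(3) by simp
    qed
    then show ?thesis
      using False i by simp
  next
    case True
    then obtain l' where l': "l < l'" "l' < aps_len Ps" "\<beta> \<in> lab (aps_at Ps l')"
      "NonNeg c \<in> grd (aps_at Ps l')"
      using labelled by blast
    obtain p where p: "\<sigma> p = l'"
      using run_visits[OF l'(2)] by blast
    have "i < p"
      using visits(1)[of p] l'(1) p i by (metis less_asym nat_neq_iff)
    then have "0 \<le> \<theta> p c"
      using guard_at[of p "NonNeg c"] l'(4) p by fastforce
    then have "frac_until (labelled \<alpha>) (labelled \<beta>) x y i"
      unfolding frac_until_def using counter[of p] \<open>i < p\<close> p l'(3)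
      by (intro exI[of _ p]) auto
    then show ?thesis
      using True i by simp
  qed
qed

lemma labelled_iff_frac_until_last_comp:
  assumes per: "periodic {\<alpha>, \<beta>, F} (comps Ps k' k)" and "k' < k" and last: "Suc k = length Ps"
    and IH: "\<And>t. comp_at t = k' \<Longrightarrow> labelled F t \<longleftrightarrow> frac_until (labelled \<alpha>) (labelled \<beta>) x y t"
    and i: "comp_at i = k"
  shows "labelled F i \<longleftrightarrow> frac_until (labelled \<alpha>) (labelled \<beta>) x y i"
proof -
  define m where "m = length (Ps ! k')"
  have k: "k < length Ps" "k' \<le> k"
    using last \<open>k' < k\<close> by simp_all
  have "length (Ps ! k) = m"
    using periodic_comps_member(1)[OF per k(2) order_refl k(1)] unfolding m_def .
  then have "ofs_at i < length (Ps ! k')"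
    using run_position(2)[of i] i unfolding m_def by simp
  then obtain j0 where j0: "comp_at j0 = k'" "ofs_at j0 = ofs_at i"
    using run_visits_position[of k'] k by (metis order_le_less_trans)
  have "j0 < i"
  proof (rule ccontr)
    assume "\<not> j0 < i"
    then have "comp_at i \<le> comp_at j0"
      by (simp add: comp_at_mono)
    then show False
      using j0(1) i \<open>k' < k\<close> by simp
  qed
  have region: "k' \<le> comp_at t \<and> comp_at t \<le> k" if "j0 \<le> t" for t
    using comp_at_mono[OF that] j0(1) run_position(1)[of t] last by simp
  have labels: "labelled f (j0 + d) \<longleftrightarrow> f \<in> lab (Ps ! k' ! ((ofs_at j0 + d) mod m))"
    if "f \<in> {\<alpha>, \<beta>, F}" for f d
    using labels_by_offset(2)[OF per k(1,2), of j0 "j0 + d"] region that unfolding m_def by simp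
  have "ofs_at i = (ofs_at j0 + (i - j0)) mod m"
    using labels_by_offset(1)[OF per k(1,2), of j0 i] region \<open>j0 < i\<close> unfolding m_def by simp
  then have "(ofs_at j0 + (i - j0 + d)) mod m = (ofs_at j0 + d) mod m" for d
    using j0(2) mod_add_left_eq[of "ofs_at j0 + (i - j0)" m d] by (simp add: add.assoc)
  then have same: "labelled f (j0 + d) \<longleftrightarrow> labelled f (i + d)" if "f \<in> {\<alpha>, \<beta>, F}" for f d
    using labels[OF that, of d] labels[OF that, of "i - j0 + d"] \<open>j0 < i\<close> by simp
  have "frac_until (labelled \<alpha>) (labelled \<beta>) x y j0 = frac_until (labelled \<alpha>) (labelled \<beta>) x y i"
    using same by (intro frac_until_shift_eq) auto
  then show ?thesis
    using IH[OF j0(1)] same[of F 0] by simp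
qed

lemma labelled_iff_frac_until_earlier_comp:
  assumes per: "periodic {\<alpha>, \<beta>, F} (comps Ps k' (Suc k))" and "k' < k" and k: "Suc k < length Ps"
    and cond: "(good x y \<alpha> (Ps ! k) \<or> neutral x y \<alpha> (Ps ! k)) \<and> \<not> labelled F i \<or>
               bad x y \<alpha> (Ps ! k) \<and> labelled F i"
    and IH: "\<And>t. comp_at t = k' \<Longrightarrow> labelled F t \<longleftrightarrow> frac_until (labelled \<alpha>) (labelled \<beta>) x y t"
    and i: "comp_at i = k"
  shows "labelled F i \<longleftrightarrow> frac_until (labelled \<alpha>) (labelled \<beta>) x y i"
proof -
  define m where "m = length (Ps ! k')"
  have lengths: "length (Ps ! k) = m" "length (Ps ! Suc k) = m"
    using periodic_comps_member(1)[OF per _ _ k, of k]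
      periodic_comps_member(1)[OF per _ _ k, of "Suc k"]
      \<open>k' < k\<close> unfolding m_def by simp_all
  then have "ofs_at i < length (Ps ! k')"
    using run_position(2)[of i] i unfolding m_def by simp
  then obtain j0 where j0: "comp_at j0 = k'" "ofs_at j0 = ofs_at i"
    using run_visits_position[of k'] k \<open>k' < k\<close> by (metis Suc_lessD order_less_trans)
  have "j0 \<le> i"
  proof (rule ccontr)
    assume "\<not> j0 \<le> i"
    then have "comp_at i \<le> comp_at j0"
      by (simp add: comp_at_mono)
    then show False
      using j0(1) i \<open>k' < k\<close> by simp
  qed
  have "comp_at (i + m) \<le> Suc k"
    using comp_at_after_period[of i m] i lengths by simp
  then have region: "k' \<le> comp_at t \<and> comp_at t \<le> Suc k"
    if "j0 \<le> t" "t < i + length (Ps ! k')" for t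
    using comp_at_mono[OF that(1)] comp_at_mono[of t "i + m"] that j0(1) unfolding m_def by simp
  have range: "k' \<le> Suc k" "k' \<le> k" "k \<le> Suc k"
    using \<open>k' < k\<close> by simp_all
  note transfer = periodic_transfer[OF per k range(1) \<open>j0 \<le> i\<close> _ j0(2) range(2,3)]
  have same_F: "labelled F j0 \<longleftrightarrow> labelled F i"
    using transfer(1) region by blast
  have transfer_good: "frac_until (labelled \<alpha>) (labelled \<beta>) x y j0"
    if "good x y \<alpha> (Ps ! k) \<or> neutral x y \<alpha> (Ps ! k)" "frac_until (labelled \<alpha>) (labelled \<beta>) x y i"
    using transfer(2) region that by blast
  have transfer_bad: "frac_until (labelled \<alpha>) (labelled \<beta>) x y i"
    if "bad x y \<alpha> (Ps ! k)" "frac_until (labelled \<alpha>) (labelled \<beta>) x y j0"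
    using transfer(3) region that by blast
  from cond consider
      (good_or_neutral) "good x y \<alpha> (Ps ! k) \<or> neutral x y \<alpha> (Ps ! k)" "\<not> labelled F i"
    | (bad) "bad x y \<alpha> (Ps ! k)" "labelled F i"
    by blast
  then show ?thesis
  proof cases
    case good_or_neutral
    note good = good_or_neutral(1)
    have "\<not> frac_until (labelled \<alpha>) (labelled \<beta>) x y i"
    proof
      assume "frac_until (labelled \<alpha>) (labelled \<beta>) x y i"
      then have "frac_until (labelled \<alpha>) (labelled \<beta>) x y j0"
        by (rule transfer_good[OF good])
      then show False
        using IH[OF j0(1)] same_F \<open>\<not> labelled F i\<close> by simp
    qed
    then show ?thesis
      using \<open>\<not> labelled F i\<close> by simp
  next
    case bad
    then have "frac_until (labelled \<alpha>) (labelled \<beta>) x y j0"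
      using IH[OF j0(1)] same_F by simp
    then show ?thesis
      using transfer_bad[OF bad(1)] \<open>labelled F i\<close> by simp
  qed
qed

lemma labelled_iff_frac_until_later_comp:
  assumes per: "periodic {\<alpha>, \<beta>, F} (comps Ps k (Suc k'))" and "k < k'" and k': "Suc k' < length Ps"
    and cond: "(good x y \<alpha> (Ps ! k) \<or> neutral x y \<alpha> (Ps ! k)) \<and> labelled F i \<or>
               bad x y \<alpha> (Ps ! k) \<and> \<not> labelled F i"
    and IH: "\<And>t. comp_at t = k' \<Longrightarrow> labelled F t \<longleftrightarrow> frac_until (labelled \<alpha>) (labelled \<beta>) x y t"
    and i: "comp_at i = k"
  shows "labelled F i \<longleftrightarrow> frac_until (labelled \<alpha>) (labelled \<beta>) x y i"
proof -
  define m where "m = length (Ps ! k)"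
  have lengths: "length (Ps ! k') = m" "length (Ps ! Suc k') = m"
    using periodic_comps_member(1)[OF per _ _ k', of k']
      periodic_comps_member(1)[OF per _ _ k', of "Suc k'"]
      \<open>k < k'\<close> unfolding m_def by simp_all
  then have "ofs_at i < length (Ps ! k')"
    using run_position(2)[of i] i unfolding m_def by simp
  then obtain j0 where j0: "comp_at j0 = k'" "ofs_at j0 = ofs_at i"
    using run_visits_position[of k'] k' by (metis Suc_lessD)
  have "i \<le> j0"
  proof (rule ccontr)
    assume "\<not> i \<le> j0"
    then have "comp_at j0 \<le> comp_at i"
      by (simp add: comp_at_mono)
    then show False
      using j0(1) i \<open>k < k'\<close> by simp
  qed
  have "comp_at (j0 + m) \<le> Suc k'"
    using comp_at_after_period[of j0 m] j0(1) lengths by simp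
  then have region: "k \<le> comp_at t \<and> comp_at t \<le> Suc k'" if "i \<le> t" "t < j0 + length (Ps ! k)" for t
    using comp_at_mono[OF that(1)] comp_at_mono[of t "j0 + m"] that i unfolding m_def by simp
  have range: "k \<le> Suc k'" "k \<le> k"
    using \<open>k < k'\<close> by simp_all
  note transfer = periodic_transfer[OF per k' range(1) \<open>i \<le> j0\<close> _ j0(2)[symmetric] range(2,1)]
  have same_F: "labelled F i \<longleftrightarrow> labelled F j0"
    using transfer(1) region by blast
  have transfer_good: "frac_until (labelled \<alpha>) (labelled \<beta>) x y i"
    if "good x y \<alpha> (Ps ! k) \<or> neutral x y \<alpha> (Ps ! k)" "frac_until (labelled \<alpha>) (labelled \<beta>) x y j0"
    using transfer(2) region that by blast
  have transfer_bad: "frac_until (labelled \<alpha>) (labelled \<beta>) x y j0"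
    if "bad x y \<alpha> (Ps ! k)" "frac_until (labelled \<alpha>) (labelled \<beta>) x y i"
    using transfer(3) region that by blast
  from cond consider (good_or_neutral) "good x y \<alpha> (Ps ! k) \<or> neutral x y \<alpha> (Ps ! k)" "labelled F i"
    | (bad) "bad x y \<alpha> (Ps ! k)" "\<not> labelled F i"
    by blast
  then show ?thesis
  proof cases
    case good_or_neutral
    then have "frac_until (labelled \<alpha>) (labelled \<beta>) x y j0"
      using IH[OF j0(1)] same_F by simp
    then show ?thesis
      using transfer_good[OF good_or_neutral(1)] good_or_neutral(2) by simp
  next
    case bad
    have "\<not> frac_until (labelled \<alpha>) (labelled \<beta>) x y i"
    proof
      assume "frac_until (labelled \<alpha>) (labelled \<beta>) x y i"
      then have "frac_until (labelled \<alpha>) (labelled \<beta>) x y j0"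
        by (rule transfer_bad[OF bad(1)])
      then show False
        using IH[OF j0(1)] same_F \<open>\<not> labelled F i\<close> by simp
    qed
    then show ?thesis
      using \<open>\<not> labelled F i\<close> by simp
  qed
qed

lemma labelled_eq_sat_P:
  assumes "\<forall>g\<in>strict_subf \<phi>. \<forall>l<aps_len Ps.
      consistent_loc lam E Ps g l \<and> (\<forall>i. \<sigma> i = l \<longrightarrow> (labelled g i \<longleftrightarrow> sat_P lam Ps \<sigma> i g))"
    and "f \<in> strict_subf \<phi>"
  shows "labelled f = (\<lambda>t. sat_P lam Ps \<sigma> t f)"
  using assms run_less_aps_len by blast

theorem consistent_loc_sound:
  "consistent_loc lam E Ps f l \<Longrightarrow> \<forall>i. \<sigma> i = l \<longrightarrow> (labelled f i \<longleftrightarrow> sat_P lam Ps \<sigma> i f)"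
proof (induction rule: consistent_loc.induct)
  case (cons_prop k l p)
  then show ?case
    by (auto simp: sat_P_def)
next
  case (cons_and k l a b)
  have "labelled a = (\<lambda>t. sat_P lam Ps \<sigma> t a)" "labelled b = (\<lambda>t. sat_P lam Ps \<sigma> t b)"
    using labelled_eq_sat_P[OF cons_and.IH strict_subf_And(1)]
      labelled_eq_sat_P[OF cons_and.IH strict_subf_And(2)]
    by simp_all
  then show ?case
    using cons_and.hyps(3) by (auto simp: sat_P_def dest: fun_cong)
next
  case (cons_not k l a)
  have "labelled a = (\<lambda>t. sat_P lam Ps \<sigma> t a)"
    by (rule labelled_eq_sat_P[OF cons_not.IH strict_subf_Not])
  then show ?case
    using cons_not.hyps(3) by (auto simp: sat_P_def dest: fun_cong)
next
  case (cons_next k l a)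
  have a: "labelled a = (\<lambda>t. sat_P lam Ps \<sigma> t a)"
    by (rule labelled_eq_sat_P[OF cons_next.IH strict_subf_Next])
  show ?case
  proof (intro allI impI)
    fix i assume i: "\<sigma> i = l"
    then have "\<sigma> (Suc i) \<in> succ E Ps l"
      using run_trans[of i] unfolding succ_def by simp
    then show "labelled (Next a) i \<longleftrightarrow> sat_P lam Ps \<sigma> i (Next a)"
      using cons_next.hyps(3) a i fun_cong[OF a, of "Suc i"] by (simp add: sat_P_def)
  qed
next
  case (cons_until_a k l a x y b)
  have "labelled b = (\<lambda>t. sat_P lam Ps \<sigma> t b)"
    by (rule labelled_eq_sat_P[OF cons_until_a.IH strict_subf_Until(2)])
  then show ?case
    using cons_until_a.hyps(3,4)
    by (auto simp: sat_P_Until_iff_frac_until frac_until_def dest: fun_cong)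
next
  case (cons_until_b k l a x y b)
  have "labelled a = (\<lambda>t. sat_P lam Ps \<sigma> t a)" "labelled b = (\<lambda>t. sat_P lam Ps \<sigma> t b)"
    using labelled_eq_sat_P[OF cons_until_b.IH strict_subf_Until(1)]
      labelled_eq_sat_P[OF cons_until_b.IH strict_subf_Until(2)]
    by simp_all
  then show ?case
    using cons_until_b.hyps(3) frac_until_good_last_comp[OF cons_until_b.hyps(4,5)]
    by (simp add: sat_P_Until_iff_frac_until)
next
  case (cons_until_c k l a x y b c)
  have sub: "labelled a = (\<lambda>t. sat_P lam Ps \<sigma> t a)" "labelled b = (\<lambda>t. sat_P lam Ps \<sigma> t b)"
    using labelled_eq_sat_P[OF cons_until_c.IH strict_subf_Until(1)]
      labelled_eq_sat_P[OF cons_until_c.IH strict_subf_Until(2)] by simp_all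
  have weights: "\<forall>l'. l \<le> l' \<and> l' < aps_len Ps \<longrightarrow>
      upd (aps_at Ps l') c = weight x y (a \<in> lab (aps_at Ps l'))"
    using cons_until_c.hyps(5,6) by (simp add: weight_def)
  show ?case
  proof (intro allI impI)
    fix i assume i: "\<sigma> i = l"
    note by_counter =
      labelled_iff_frac_until_counter[OF cons_until_c.hyps(3) i cons_until_c.hyps(4)]
    have "labelled (Until a x y b) i \<longleftrightarrow> frac_until (labelled a) (labelled b) x y i"
      using cons_until_c.hyps(7,8) i by (intro by_counter[OF weights]) auto
    then show "labelled (Until a x y b) i \<longleftrightarrow> sat_P lam Ps \<sigma> i (Until a x y b)"
      using sub by (simp add: sat_P_Until_iff_frac_until)
  qed
next
  case (cons_until_d k l a x y b k')
  define F where "F = Until a x y b"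
  have "labelled a = (\<lambda>t. sat_P lam Ps \<sigma> t a)" "labelled b = (\<lambda>t. sat_P lam Ps \<sigma> t b)"
    using labelled_eq_sat_P[OF cons_until_d.IH(1) strict_subf_Until(1)]
      labelled_eq_sat_P[OF cons_until_d.IH(1) strict_subf_Until(2)]
    by simp_all
  then have sat_F: "sat_P lam Ps \<sigma> t F \<longleftrightarrow> frac_until (labelled a) (labelled b) x y t" for t
    unfolding F_def by (simp add: sat_P_Until_iff_frac_until)
  have IH: "labelled F t \<longleftrightarrow> frac_until (labelled a) (labelled b) x y t" if "comp_at t = k'" for t
    using cons_until_d.IH(2) comp_of_offset(2)[OF run_less_aps_len, of t] that sat_F
    unfolding F_def by auto
  show ?case
    unfolding F_def[symmetric] sat_F
  proof (intro allI impI)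
    fix i assume i: "\<sigma> i = l"
    then have k: "comp_at i = k"
      using comp_of_eq[OF cons_until_d.hyps(1,2)] by simp
    consider "Suc k = length Ps"
      | "Suc k < length Ps" "(good x y a (Ps ! k) \<or> neutral x y a (Ps ! k)) \<and> \<not> labelled F i \<or>
          bad x y a (Ps ! k) \<and> labelled F i"
      | "Suc k < length Ps" "(good x y a (Ps ! k) \<or> neutral x y a (Ps ! k)) \<and> labelled F i \<or>
          bad x y a (Ps ! k) \<and> \<not> labelled F i"
      using cons_until_d.hyps(1) unfolding good_def neutral_def bad_def by linarith
    then show "labelled F i \<longleftrightarrow> frac_until (labelled a) (labelled b) x y i"
    proof cases
      case 1
      then show ?thesis
        using labelled_iff_frac_until_last_comp[OF _ _ 1 IH k] cons_until_d.hyps(4)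
        unfolding F_def by blast
    next
      case 2
      then show ?thesis
        using labelled_iff_frac_until_earlier_comp[OF _ _ 2(1) 2(2) IH k] cons_until_d.hyps(5) i
        unfolding F_def by blast
    next
      case 3
      then show ?thesis
        using labelled_iff_frac_until_later_comp[OF _ _ _ 3(2) IH k] cons_until_d.hyps(6) i
        unfolding F_def by blast
    qed
  qed
qed

corollary consistent_sound: "consistent lam E Ps f \<Longrightarrow> labelled f = (\<lambda>t. sat_P lam Ps \<sigma> t f)"
  unfolding consistent_def using consistent_loc_sound run_less_aps_len by blast

end

section \<open>Periodicity of a ratio until along a repeated loop\<close>

lemma nth_concat_replicate: "j < n * length v \<Longrightarrow> concat (replicate n v) ! j = v ! (j mod length v)"
proof (induction n arbitrary: j)
  case (Suc n)
  show ?case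
  proof (cases "j < length v")
    case False
    then have "concat (replicate n v) ! (j - length v) = v ! ((j - length v) mod length v)"
      using Suc by (intro Suc.IH) auto
    then show ?thesis
      using False by (simp add: nth_append le_mod_geq)
  qed (simp add: nth_append)
qed simp

lemma shift_periodic_repeated_block:
  "shift_periodic (length v) (length u) (length u + (n - 1) * length v)
     (\<lambda>i. if i < length u + n * length v then (u @ concat (replicate n v)) ! i
          else w (i - (length u + n * length v)))"
proof -
  have "(u @ concat (replicate n v)) ! i = v ! ((i - length u) mod length v)"
    if "length u \<le> i" "i < length u + n * length v" for i
    using that nth_concat_replicate[of "i - length u" n v] by (simp add: nth_append)
  moreover have "(t + length v - length u) mod length v = (t - length u) mod length v"
    if "length u \<le> t" for t
    using that by (metis Nat.add_diff_assoc2 mod_add_self2)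
  ultimately show ?thesis
    unfolding shift_periodic_def by (cases n) (auto simp: algebra_simps)
qed

theorem lemma8:
  fixes S :: "'s set" and sI :: 's and E :: "('s \<times> 's) set" and lam :: "'s \<Rightarrow> 'ap set"
    and AP :: "'ap set"
    and \<phi> \<psi> :: "'ap fltl" and x y :: nat
    and Ps :: "('s, 'ap, 'c::finite) apath list"
    and k :: nat and \<sigma> :: "nat \<Rightarrow> nat" and u :: "nat list" and n :: nat and w :: "nat \<Rightarrow> nat"
  assumes K: "kripke S sI E lam AP" and flat: "flat_kripke S E"
    and wf: "wf_fltl (Until \<phi> x y \<psi>)"
    and aps: "is_aps S E AP (Until \<phi> x y \<psi>) Ps"
    and cons_phi: "consistent lam E Ps \<phi>" and cons_psi: "consistent lam E Ps \<psi>"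
    and k_lt: "Suc k < length Ps" and k_loop: "is_loop E (Ps ! k)"
    and run: "\<sigma> \<in> Runs E Ps"
    and n_ge: "n \<ge> length (Ps ! k) * y + 2"
    and form: "\<sigma> = (\<lambda>i. if i < length u + n * length (Ps ! k)
                        then (u @ concat (replicate n
                               [comp_start Ps k ..< comp_start Ps k + length (Ps ! k)])) ! i
                        else w (i - (length u + n * length (Ps ! k))))"
  shows "\<exists>n1 n2. n = n1 + length (Ps ! k) * y + n2 \<and>
           (\<forall>i. (length u \<le> i \<and> i < length u + (n1 - 1) * length (Ps ! k) \<or>
                 length u + (n1 + length (Ps ! k) * y) * length (Ps ! k) \<le> i \<and>
                 i < length u + (n1 + length (Ps ! k) * y + n2 - 2) * length (Ps ! k)) \<longrightarrow>
                (sat_P lam Ps \<sigma> i (Until \<phi> x y \<psi>) \<longleftrightarrow>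
                 sat_P lam Ps \<sigma> (i + length (Ps ! k)) (Until \<phi> x y \<psi>)))"
proof -
  have "\<forall>P\<in>set Ps. P \<noteq> []" "Ps \<noteq> []"
    using aps unfolding is_aps_def is_row_def is_loop_def by blast+
  then interpret aps_run E Ps \<sigma>
    using run by unfold_locales
  have sat_iff: "sat_P lam Ps \<sigma> i (Until \<phi> x y \<psi>) \<longleftrightarrow>
      frac_until (labelled \<phi>) (labelled \<psi>) x y i" for i
    by (simp add: sat_P_Until_iff_frac_until consistent_sound[OF cons_phi]
        consistent_sound[OF cons_psi])
  define v where "v = [comp_start Ps k ..< comp_start Ps k + length (Ps ! k)]"
  have "shift_periodic (length (Ps ! k)) (length u) (length u + (n - 1) * length (Ps ! k)) \<sigma>"
    using shift_periodic_repeated_block[of v u n w] unfolding form v_def by (simp cong: if_cong)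
  then have "shift_periodic (length (Ps ! k)) (length u) (length u + (n - 1) * length (Ps ! k))
      (labelled f)" for f
    by (rule shift_periodic_compose)
  moreover have "0 < length (Ps ! k)"
    using k_loop unfolding is_loop_def by simp
  ultimately show ?thesis
    unfolding sat_iff using wf n_ge by (intro frac_until_periodic_outside_block) auto
qed

end
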